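(* Let $n\ge2$. The set $\mathcal{A}_n$ of arc permutations in $\mathfrak{S}_n$ is cyclic Schur-positive.
   Context: A permutation $\pi\in\mathfrak{S}_n$ (one-line notation) is an arc permutation if for every $1\le j\le n$ the set $\{\pi(1),\dots,\pi(j)\}$ is an interval in $\mathbb{Z}_n$ (i.e., a set of cyclically consecutive residues). For $\pi\in\mathfrak{S}_n$, $\mathrm{Des}(\pi)=\{i\in[n-1]:\pi(i)>\pi(i+1)\}$, $\mathrm{cDes}(\pi)=\{i\in[n]:\pi(i)>\pi(i+1)\}$ with $\pi(n+1):=\pi(1)$. $\mathbf{x}^J=\prod_{i\in J}x_i$; $i+J=\{i+j\bmod n:j\in J\}\subseteq[n]$. Cyclic Schur-positive: for a skew shape $\lambda/\mu$ with $n$ cells, $\mathrm{Des}(T)$ for $T\in\mathrm{SYT}(\lambda/\mu)$ is the set of $i\in[n-1]$ with $i+1$ in a strictly lower row than $i$. A cyclic descent extension on $\mathrm{SYT}(\lambda/\mu)$ is a pair $(\mathrm{cDes},\psi)$, $\psi$ a bijection, with $\mathrm{cDes}(T)\cap[n-1]=\mathrm{Des}(T)$, $\mathrm{cDes}(\psi T)=1+\mathrm{cDes}(T)$, $\emptyset\ne\mathrm{cDes}(T)\ne[n]$; it exists iff $\lambda/\mu$ is not a connected ribbon, and $\sum_T\mathbf{x}^{\mathrm{cDes}(T)}$ is then independent of the choice. $A\subseteq\mathfrak{S}_n$ is cyclic Schur-positive if $\sum_{\pi\in A}\mathbf{x}^{\mathrm{cDes}(\pi)}=\sum m_{\lambda/\mu}\sum_{T\in\mathrm{SYT}(\lambda/\mu)}\mathbf{x}^{\mathrm{cDes}(T)}$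 for some nonnegative integers $m_{\lambda/\mu}$ indexed by skew shapes with $n$ cells that are not connected ribbons. *)

theory Defs
  imports "HOL-Combinatorics.Permutations"
begin

definition cyc_interval :: "nat \<Rightarrow> nat set \<Rightarrow> bool" where
  "cyc_interval n S \<longleftrightarrow> (\<exists>a m. m \<le> n \<and> S = {(a + k) mod n + 1 | k. k < m})"

definition arc_perm :: "nat \<Rightarrow> (nat \<Rightarrow> nat) \<Rightarrow> bool" where
  "arc_perm n \<pi> \<longleftrightarrow> \<pi> permutes {1..n} \<and> (\<forall>j\<in>{1..n}. cyc_interval n (\<pi> ` {1..j}))"

definition arc_perms :: "nat \<Rightarrow> (nat \<Rightarrow> nat) set" where
  "arc_perms n = {\<pi>. arc_perm n \<pi>}"

definition cDes_perm :: "nat \<Rightarrow> (nat \<Rightarrow> nat) \<Rightarrow> nat set" where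
  "cDes_perm n \<pi> = {i \<in> {1..n}. \<pi> i > \<pi> (if i = n then 1 else i + 1)}"

text \<open>Cyclic shift i + J of a subset J of [n] (here with i = 1).\<close>
definition cyc_shift :: "nat \<Rightarrow> nat set \<Rightarrow> nat set" where
  "cyc_shift n J = {(j mod n) + 1 | j. j \<in> J}"

text \<open>Cells are pairs (row, column), 0-indexed, English convention (row index grows downward).
 A Young diagram (of a partition) is a finite down-closed set of cells.\<close>
definition young :: "(nat \<times> nat) set \<Rightarrow> bool" where
  "young Y \<longleftrightarrow> finite Y \<and> (\<forall>i j i' j'. (i, j) \<in> Y \<and> i' \<le> i \<and> j' \<le> j \<longrightarrow> (i', j') \<in> Y)"

definition skew_shape :: "(nat \<times> nat) set \<Rightarrow> (nat \<times> nat) set \<Rightarrow> bool" where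
  "skew_shape L M \<longleftrightarrow> young L \<and> young M \<and> M \<subseteq> L"

definition syt :: "nat \<Rightarrow> (nat \<times> nat) set \<Rightarrow> ((nat \<times> nat) \<Rightarrow> nat) \<Rightarrow> bool" where
  "syt n D T \<longleftrightarrow> bij_betw T D {1..n} \<and> (\<forall>c. c \<notin> D \<longrightarrow> T c = 0)
     \<and> (\<forall>i j. (i, j) \<in> D \<and> (i, Suc j) \<in> D \<longrightarrow> T (i, j) < T (i, Suc j))
     \<and> (\<forall>i j. (i, j) \<in> D \<and> (Suc i, j) \<in> D \<longrightarrow> T (i, j) < T (Suc i, j))"

definition Des_syt :: "nat \<Rightarrow> (nat \<times> nat) set \<Rightarrow> ((nat \<times> nat) \<Rightarrow> nat) \<Rightarrow> nat set" where
  "Des_syt n D T = {i \<in> {1..n-1}. fst (inv_into D T i) < fst (inv_into D T (i + 1))}"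

definition cell_adj :: "nat \<times> nat \<Rightarrow> nat \<times> nat \<Rightarrow> bool" where
  "cell_adj c d \<longleftrightarrow> (fst c = fst d \<and> (snd d = Suc (snd c) \<or> snd c = Suc (snd d)))
                  \<or> (snd c = snd d \<and> (fst d = Suc (fst c) \<or> fst c = Suc (fst d)))"

definition connected_cells :: "(nat \<times> nat) set \<Rightarrow> bool" where
  "connected_cells D \<longleftrightarrow> (\<forall>c\<in>D. \<forall>d\<in>D. (\<lambda>x y. x \<in> D \<and> y \<in> D \<and> cell_adj x y)\<^sup>*\<^sup>* c d)"

definition connected_ribbon :: "(nat \<times> nat) set \<Rightarrow> bool" where
  "connected_ribbon D \<longleftrightarrow> D \<noteq> {} \<and> connected_cells D \<and>
     \<not> (\<exists>i j. (i, j) \<in> D \<and> (i, Suc j) \<in> D \<and> (Suc i, j) \<in> D \<and> (Suc i, Suc j) \<in> D)"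

definition cyc_desc_ext :: "nat \<Rightarrow> (nat \<times> nat) set \<Rightarrow> (((nat \<times> nat) \<Rightarrow> nat) \<Rightarrow> nat set)
      \<Rightarrow> (((nat \<times> nat) \<Rightarrow> nat) \<Rightarrow> ((nat \<times> nat) \<Rightarrow> nat)) \<Rightarrow> bool" where
  "cyc_desc_ext n D cD \<psi> \<longleftrightarrow> bij_betw \<psi> {T. syt n D T} {T. syt n D T} \<and>
     (\<forall>T. syt n D T \<longrightarrow>
        cD T \<subseteq> {1..n} \<and> cD T \<inter> {1..n-1} = Des_syt n D T \<and>
        cD (\<psi> T) = cyc_shift n (cD T) \<and> cD T \<noteq> {} \<and> cD T \<noteq> {1..n})"

text \<open>Equality of the generating functions sum x^cDes is expressed coefficientwise:
 for every J, the number of elements with cyclic descent set J agree. Nonnegative integer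
 multiplicities m_{lambda/mu} are encoded by a finite list of shapes (with repetitions);
 for each shape a cyclic descent extension is chosen (the sum is independent of it).\<close>
definition cyclic_schur_positive :: "nat \<Rightarrow> (nat \<Rightarrow> nat) set \<Rightarrow> bool" where
  "cyclic_schur_positive n A \<longleftrightarrow>
    (\<exists>shapes :: ((nat \<times> nat) set \<times> (nat \<times> nat) set) list.
     \<exists>cds :: nat \<Rightarrow> (((nat \<times> nat) \<Rightarrow> nat) \<Rightarrow> nat set).
       (\<forall>k < length shapes.
          skew_shape (fst (shapes ! k)) (snd (shapes ! k)) \<and>
          card (fst (shapes ! k) - snd (shapes ! k)) = n \<and>
          \<not> connected_ribbon (fst (shapes ! k) - snd (shapes ! k)) \<and>
          (\<exists>\<psi>. cyc_desc_ext n (fst (shapes ! k) - snd (shapes ! k)) (cds k) \<psi>)) \<and>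
       (\<forall>J. card {\<pi> \<in> A. cDes_perm n \<pi> = J} =
            (\<Sum>k < length shapes.
               card {T. syt n (fst (shapes ! k) - snd (shapes ! k)) T \<and> cds k T = J})))"

end

theory Submission
  imports Defs
begin

(* An arc permutation is determined by the position p of its maximal letter n together with its
   cyclic descent set J: the values before p form an interval at the bottom or at the top of [n - 1],
   according to whether n is a cyclic descent, and the descents then fix the order in which the
   prefix and the reversed suffix grow their intervals.  Conversely such a permutation exists
   exactly when p starts a cyclic run of J, that is p \<in> J and p - 1 \<notin> J (cyclically).  So the
   number of arc permutations with cyclic descent set J is the number of these run starts.

   For even b < n consider the skew shape made of a single cell, a column of b cells and a row of
   n - 1 - b cells, pairwise not adjacent.  A tableau is determined by the entry p of the single
   cell and the set C of column entries, and its descent set is ({p} \<union> C) - {p - 1} restricted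
   to [n - 1].  Reading p - 1 cyclically instead, this set together with the rotation of all
   entries by one is a cyclic descent extension.  For a given J only the shape with
   b = 2 (|J| div 2) contributes, with one tableau for every run start p of J. *)

section \<open>Cyclic intervals of [n]\<close>

definition cyc_succ :: "nat \<Rightarrow> nat \<Rightarrow> nat" where
  "cyc_succ n j = j mod n + 1"

definition cyc_pred :: "nat \<Rightarrow> nat \<Rightarrow> nat" where
  "cyc_pred n p = (if p = 1 then n else p - 1)"

lemma cyc_succ_eq: "j \<in> {1..n} \<Longrightarrow> cyc_succ n j = (if j = n then 1 else Suc j)"
  by (auto simp: cyc_succ_def)

lemma cyc_succ_in: "j \<in> {1..n} \<Longrightarrow> cyc_succ n j \<in> {1..n}"
  by (auto simp: cyc_succ_eq)

lemma cyc_pred_in: "p \<in> {1..n} \<Longrightarrow> cyc_pred n p \<in> {1..n}"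
  by (auto simp: cyc_pred_def)

lemma cyc_pred_neq: "n \<ge> 2 \<Longrightarrow> p \<in> {1..n} \<Longrightarrow> cyc_pred n p \<noteq> p"
  by (auto simp: cyc_pred_def)

lemma cyc_pred_eq_iff: "p \<in> {1..n} \<Longrightarrow> i \<in> {1..<n} \<Longrightarrow> cyc_pred n p = i \<longleftrightarrow> p = Suc i"
  by (auto simp: cyc_pred_def)

lemma cyc_pred_cyc_succ: "j \<in> {1..n} \<Longrightarrow> cyc_pred n (cyc_succ n j) = j"
  by (auto simp: cyc_succ_eq cyc_pred_def)

lemma cyc_succ_cyc_pred: "j \<in> {1..n} \<Longrightarrow> cyc_succ n (cyc_pred n j) = j"
  by (auto simp: cyc_succ_def cyc_pred_def)

lemma inj_on_cyc_succ: "inj_on (cyc_succ n) {1..n}"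
  by (metis inj_onI cyc_pred_cyc_succ)

lemma inj_on_cyc_pred: "inj_on (cyc_pred n) {1..n}"
  by (metis inj_onI cyc_succ_cyc_pred)

lemma cyc_shift_eq_image: "cyc_shift n X = cyc_succ n ` X"
  by (auto simp: cyc_shift_def cyc_succ_def)

lemma image_add_lessThan: "(+) a ` {..<m} = {a..<a + (m::nat)}"
  using image_add_atLeastLessThan[of a 0 m] by (simp add: lessThan_atLeast0 add.commute)

lemma cyc_interval_iff_image:
  "cyc_interval n S \<longleftrightarrow> (\<exists>a m. m \<le> n \<and> S = cyc_succ n ` {a..<a + m})"
proof -
  have "{(a + k) mod n + 1 | k. k < m} = cyc_succ n ` ((+) a ` {..<m})" for a m
    by (auto simp: cyc_succ_def)
  then show ?thesis
    unfolding cyc_interval_def image_add_lessThan by simp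
qed

lemma inj_on_cyc_succ_period: "inj_on (cyc_succ n) {a..<a + n}"
proof
  fix x y assume x: "x \<in> {a..<a + n}" and y: "y \<in> {a..<a + n}"
    and "cyc_succ n x = cyc_succ n y"
  then have eq: "x mod n = y mod n"
    by (simp add: cyc_succ_def)
  have close: "u = v" if "u \<le> v" "v < u + n" "u mod n = v mod n" for u v
    using that mod_eq_dvd_iff_nat[of u v n] nat_dvd_not_less[of "v - u" n] by fastforce
  show "x = y"
  proof (cases "x \<le> y")
    case True
    then show ?thesis using close[of x y] x y eq by auto
  next
    case False
    then show ?thesis using close[of y x] x y eq by auto
  qed
qed

lemma cyc_succ_image_period: "n \<ge> 1 \<Longrightarrow> cyc_succ n ` {a..<a + n} = {1..n}"
proof -
  assume "n \<ge> 1"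
  then have "cyc_succ n ` {a..<a + n} \<subseteq> {1..n}"
    by (auto simp: cyc_succ_def Suc_le_eq)
  moreover have "card (cyc_succ n ` {a..<a + n}) = n"
    using inj_on_cyc_succ_period card_image by fastforce
  ultimately show ?thesis
    by (simp add: card_subset_eq)
qed

lemma cyc_interval_complement:
  assumes "n \<ge> 1" and "cyc_interval n S"
  shows "cyc_interval n ({1..n} - S)"
proof -
  obtain a m where m: "m \<le> n" and S: "S = cyc_succ n ` {a..<a + m}"
    using assms(2) cyc_interval_iff_image by blast
  have "{1..n} - S = cyc_succ n ` {a..<a + n} - cyc_succ n ` {a..<a + m}"
    using cyc_succ_image_period[OF assms(1)] S by simp
  also have "\<dots> = cyc_succ n ` ({a..<a + n} - {a..<a + m})"
    by (rule inj_on_image_set_diff[OF inj_on_cyc_succ_period[of n a], symmetric]) (use m in auto)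
  also have "{a..<a + n} - {a..<a + m} = {a + m..<(a + m) + (n - m)}"
    using m by auto
  finally have "{1..n} - S = cyc_succ n ` {a + m..<(a + m) + (n - m)}" .
  then show ?thesis
    unfolding cyc_interval_iff_image using diff_le_self by blast
qed

lemma cyc_interval_atLeastLessThan:
  assumes "1 \<le> l" and "l + m \<le> n + 1"
  shows "cyc_interval n {l..<l + m}"
proof -
  have "cyc_succ n j = Suc j" if "j \<in> {l - 1..<l - 1 + m}" for j
  proof -
    have "j < n"
      using assms that by auto
    then show ?thesis
      by (simp add: cyc_succ_def)
  qed
  then have "cyc_succ n ` {l - 1..<l - 1 + m} = Suc ` {l - 1..<l - 1 + m}"
    by (rule image_cong[OF refl])
  also have "\<dots> = {l..<l + m}"
    using assms(1) by (simp add: image_Suc_atLeastLessThan)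
  finally have "{l..<l + m} = cyc_succ n ` {l - 1..<l - 1 + m}" ..
  moreover have "m \<le> n"
    using assms by simp
  ultimately show ?thesis
    unfolding cyc_interval_iff_image by blast
qed

lemma cyc_interval_without_max:
  assumes "n \<ge> 1" and "cyc_interval n S" and "n \<notin> S"
  shows "\<exists>l. S = {l..<l + card S} \<and> 1 \<le> l \<and> l + card S \<le> n"
proof -
  obtain a m where S: "S = cyc_succ n ` {a..<a + m}"
    using assms(2) cyc_interval_iff_image by blast
  define a' where "a' = a mod n"
  have "a' < n"
    using assms(1) by (simp add: a'_def)
  have succ: "cyc_succ n (a + k) = (a' + k) mod n + 1" for k
    by (simp add: cyc_succ_def a'_def mod_add_left_eq)
  have no_wrap: "a' + m < n \<or> m = 0"
  proof (rule ccontr)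
    assume "\<not> (a' + m < n \<or> m = 0)"
    then have "a + (n - 1 - a') \<in> {a..<a + m}"
      by auto
    moreover have "cyc_succ n (a + (n - 1 - a')) = n"
      using succ[of "n - 1 - a'"] \<open>a' < n\<close> by simp
    ultimately show False
      using assms(3) S by (metis image_eqI)
  qed
  have "S = (\<lambda>k. cyc_succ n (a + k)) ` {..<m}"
    unfolding S image_add_lessThan[symmetric] image_image ..
  also have "\<dots> = (\<lambda>k. a' + 1 + k) ` {..<m}"
    using no_wrap by (intro image_cong) (auto simp: succ)
  also have "\<dots> = {a' + 1..<a' + 1 + m}"
    by (rule image_add_lessThan)
  finally show ?thesis
    using no_wrap \<open>a' < n\<close> by (intro exI[of _ "a' + 1"]) auto
qed

lemma cyc_interval_max_neighbour:
  assumes "n \<ge> 2" and "cyc_interval n S" and "n \<in> S" and "card S \<ge> 2"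
  shows "1 \<in> S \<or> n - 1 \<in> S"
proof -
  obtain a m where S: "S = cyc_succ n ` {a..<a + m}"
    using assms(2) cyc_interval_iff_image by blast
  have "2 \<le> m"
    using assms(4) card_image_le[of "{a..<a + m}" "cyc_succ n"] S by simp
  obtain j where j: "j \<in> {a..<a + m}" "j mod n = n - 1"
    using assms(3) S by (auto simp: cyc_succ_def)
  show ?thesis
  proof (cases "Suc j < a + m")
    case True
    have "cyc_succ n (Suc j) = 1"
      using j(2) assms(1) by (simp add: cyc_succ_def mod_Suc)
    moreover have "Suc j \<in> {a..<a + m}"
      using True j(1) by auto
    ultimately show ?thesis
      using S by (metis image_eqI)
  next
    case False
    then have "j - 1 \<in> {a..<a + m}" and "Suc (j - 1) = j"
      using j(1) \<open>2 \<le> m\<close> by auto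
    then have "Suc ((j - 1) mod n) = n - 1"
      using j(2) assms(1) mod_Suc[of "j - 1" n] by (auto split: if_splits)
    then have "cyc_succ n (j - 1) = n - 1"
      by (simp add: cyc_succ_def)
    then show ?thesis
      using \<open>j - 1 \<in> _\<close> S by (metis image_eqI)
  qed
qed

section \<open>Sequences whose prefixes are intervals\<close>

definition prefix_intervals :: "(nat \<Rightarrow> nat) \<Rightarrow> nat \<Rightarrow> bool" where
  "prefix_intervals f m \<longleftrightarrow> (\<forall>j\<in>{1..m}. \<exists>l. f ` {1..j} = {l..<l + j})"

lemma prefix_intervals_le: "prefix_intervals f m \<Longrightarrow> k \<le> m \<Longrightarrow> prefix_intervals f k"
  unfolding prefix_intervals_def by auto

lemma prefix_intervals_inj_on:
  assumes "prefix_intervals f m"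
  shows "inj_on f {1..m}"
proof (cases "m = 0")
  case True
  then show ?thesis by simp
next
  case False
  then have "m \<in> {1..m}"
    by simp
  then obtain l where "f ` {1..m} = {l..<l + m}"
    using assms unfolding prefix_intervals_def by blast
  then have "card (f ` {1..m}) = card {1..m}"
    by simp
  then show ?thesis
    by (simp add: inj_on_iff_eq_card)
qed

lemma prefix_intervals_image_remove_last:
  assumes "prefix_intervals f (Suc m)"
  shows "f ` {1..m} = f ` {1..Suc m} - {f (Suc m)}"
proof -
  have "{1..m} = {1..Suc m} - {Suc m}"
    by auto
  then show ?thesis
    using inj_on_image_set_diff[OF prefix_intervals_inj_on[OF assms], of "{1..Suc m}" "{Suc m}"] by simp
qed

lemma prefix_intervals_last:
  assumes f: "prefix_intervals f (Suc m)" and "m \<ge> 1"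
    and L: "f ` {1..Suc m} = {L..<L + Suc m}"
  shows "f (Suc m) = (if f (Suc m) < f m then L else L + m)"
proof -
  have "m \<in> {1..Suc m}"
    using \<open>m \<ge> 1\<close> by simp
  then obtain l where l: "f ` {1..m} = {l..<l + m}"
    using f unfolding prefix_intervals_def by blast
  have rest: "{l..<l + m} = {L..<L + Suc m} - {f (Suc m)}"
    using prefix_intervals_image_remove_last[OF f] l L by simp
  have endpoint: "f (Suc m) = L \<or> f (Suc m) = L + m"
  proof (rule ccontr)
    assume "\<not> ?thesis"
    then have "L \<in> {l..<l + m}" and "L + m \<in> {l..<l + m}"
      unfolding rest by auto
    then show False
      by auto
  qed
  have "f m \<in> f ` {1..m}"
    using \<open>m \<ge> 1\<close> by simp
  then have "f m \<in> {L..<L + Suc m} - {f (Suc m)}"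
    using l rest by simp
  then show ?thesis
    using endpoint by auto
qed

lemma prefix_intervals_unique:
  assumes "prefix_intervals f m" and "prefix_intervals g m" and "f ` {1..m} = g ` {1..m}"
    and "\<And>i. i \<in> {1..<m} \<Longrightarrow> f (Suc i) < f i \<longleftrightarrow> g (Suc i) < g i"
  shows "\<forall>i\<in>{1..m}. f i = g i"
  using assms
proof (induction m)
  case 0
  then show ?case by simp
next
  case (Suc m)
  have last: "f (Suc m) = g (Suc m)"
  proof (cases "m = 0")
    case True
    then show ?thesis using Suc.prems(3) by simp
  next
    case False
    have "Suc m \<in> {1..Suc m}"
      by simp
    then obtain L where L: "f ` {1..Suc m} = {L..<L + Suc m}"
      using Suc.prems(1) unfolding prefix_intervals_def by blast
    have L': "g ` {1..Suc m} = {L..<L + Suc m}"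
      using L Suc.prems(3) by simp
    have "m \<in> {1..<Suc m}"
      using False by simp
    then have "f (Suc m) < f m \<longleftrightarrow> g (Suc m) < g m"
      by (rule Suc.prems(4))
    moreover have "f (Suc m) = (if f (Suc m) < f m then L else L + m)"
      by (rule prefix_intervals_last[OF Suc.prems(1) _ L]) (use False in simp)
    moreover have "g (Suc m) = (if g (Suc m) < g m then L else L + m)"
      by (rule prefix_intervals_last[OF Suc.prems(2) _ L']) (use False in simp)
    ultimately show ?thesis
      by (auto split: if_splits)
  qed
  have "\<forall>i\<in>{1..m}. f i = g i"
  proof (rule Suc.IH)
    show "prefix_intervals f m" "prefix_intervals g m"
      using prefix_intervals_le[OF Suc.prems(1)] prefix_intervals_le[OF Suc.prems(2)] by simp_all
    show "f ` {1..m} = g ` {1..m}"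
      using prefix_intervals_image_remove_last[OF Suc.prems(1)]
        prefix_intervals_image_remove_last[OF Suc.prems(2)] Suc.prems(3) last by simp
    show "f (Suc i) < f i \<longleftrightarrow> g (Suc i) < g i" if "i \<in> {1..<m}" for i
      using Suc.prems(4) that by simp
  qed
  then show ?case
    using last by (auto simp: le_Suc_eq)
qed

lemma prefix_intervals_exists:
  "\<exists>f. prefix_intervals f m \<and> f ` {1..m} = {L..<L + m} \<and> (\<forall>i\<in>{1..<m}. f (Suc i) < f i \<longleftrightarrow> i \<in> S)"
proof (induction m arbitrary: L)
  case 0
  then show ?case by (auto simp: prefix_intervals_def)
next
  case (Suc m)
  define L' where "L' = (if m \<in> S then Suc L else L)"
  obtain g where g: "prefix_intervals g m" "g ` {1..m} = {L'..<L' + m}"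
    "\<forall>i\<in>{1..<m}. g (Suc i) < g i \<longleftrightarrow> i \<in> S"
    using Suc.IH by blast
  define f where "f = g(Suc m := if m \<in> S then L else L + m)"
  have prefix: "f ` {1..j} = g ` {1..j}" if "j \<le> m" for j
    using that by (auto simp: f_def)
  have image: "f ` {1..Suc m} = {L..<L + Suc m}"
  proof -
    have "{1..Suc m} = insert (Suc m) {1..m}"
      by auto
    then have "f ` {1..Suc m} = insert (f (Suc m)) (g ` {1..m})"
      using prefix[of m] by simp
    also have "\<dots> = {L..<L + Suc m}"
      using g(2) by (cases "m \<in> S") (auto simp: f_def L'_def)
    finally show ?thesis .
  qed
  have "prefix_intervals f (Suc m)"
    unfolding prefix_intervals_def
  proof
    fix j assume "j \<in> {1..Suc m}"
    then consider "j = Suc m" | "j \<in> {1..m}"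
      by fastforce
    then show "\<exists>l. f ` {1..j} = {l..<l + j}"
      by cases (use image g(1) prefix in \<open>auto simp: prefix_intervals_def\<close>)
  qed
  moreover have "f (Suc i) < f i \<longleftrightarrow> i \<in> S" if "i \<in> {1..<Suc m}" for i
  proof (cases "i = m")
    case True
    then have "g m \<in> {L'..<L' + m}"
      using g(2) that by auto
    then show ?thesis
      using True by (auto simp: f_def L'_def)
  next
    case False
    then show ?thesis
      using g(3) that by (auto simp: f_def)
  qed
  ultimately show ?case
    using image by blast
qed

lemma prefix_intervals_cyc_interval:
  assumes "prefix_intervals f m" and "f ` {1..m} \<subseteq> {1..<n}" and "j \<le> m"
  shows "cyc_interval n (f ` {1..j})"
proof (cases "j = 0")
  case True
  then show ?thesis
    using cyc_interval_atLeastLessThan[of 1 0 n] by simp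
next
  case False
  then obtain l where l: "f ` {1..j} = {l..<l + j}"
    using assms(1,3) unfolding prefix_intervals_def by fastforce
  moreover have "f ` {1..j} \<subseteq> {1..<n}"
    using assms(2,3) by auto
  ultimately have "l \<in> {1..<n}" "l + j - 1 \<in> {1..<n}"
    using False by auto
  then have "1 \<le> l" "l + j \<le> n + 1"
    using False by auto
  then show ?thesis
    using cyc_interval_atLeastLessThan[of l j n] l by simp
qed

lemma image_reverse_atLeastAtMost:
  "j \<le> n \<Longrightarrow> (\<lambda>i. f (n + 1 - i)) ` {1..j} = f ` {n + 1 - j..(n::nat)}"
proof
  assume j: "j \<le> n"
  show "(\<lambda>i. f (n + 1 - i)) ` {1..j} \<subseteq> f ` {n + 1 - j..n}"
    using j by (auto intro!: imageI)
  show "f ` {n + 1 - j..n} \<subseteq> (\<lambda>i. f (n + 1 - i)) ` {1..j}"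
  proof
    fix y assume "y \<in> f ` {n + 1 - j..n}"
    then obtain k where k: "k \<in> {n + 1 - j..n}" "y = f k"
      by auto
    then have "n + 1 - k \<in> {1..j}" "n + 1 - (n + 1 - k) = k"
      using j by auto
    then show "y \<in> (\<lambda>i. f (n + 1 - i)) ` {1..j}"
      using k by (metis image_eqI)
  qed
qed

section \<open>Arc permutations with given cyclic descent set\<close>

definition run_starts :: "nat \<Rightarrow> nat set \<Rightarrow> nat set" where
  "run_starts n J = {p \<in> {1..n}. p \<in> J \<and> cyc_pred n p \<notin> J}"

lemma arc_perm_permutes: "arc_perm n \<pi> \<Longrightarrow> \<pi> permutes {1..n}"
  by (simp add: arc_perm_def)

lemma permutes_preimage_max:
  fixes n :: nat
  assumes "\<pi> permutes {1..n}" and "\<pi> p = n" and "n \<ge> 1"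
  shows "p \<in> {1..n}"
proof -
  have "\<pi> p \<in> {1..n}"
    using assms(2,3) by simp
  then show ?thesis
    using permutes_in_image[OF assms(1)] by blast
qed

lemma permutes_less_max:
  fixes n :: nat
  assumes "\<pi> permutes {1..n}" and "\<pi> p = n" and "x \<in> {1..n}" and "x \<noteq> p"
  shows "\<pi> x < n"
proof -
  have "\<pi> x \<noteq> \<pi> p"
    using permutes_inj[OF assms(1)] assms(4) by (auto dest: injD)
  moreover have "\<pi> x \<in> {1..n}"
    using permutes_in_image[OF assms(1)] assms(3) by blast
  ultimately show ?thesis
    using assms(2) by auto
qed

lemma permutes_image_after_max:
  fixes n :: nat
  assumes "\<pi> permutes {1..n}" and "p \<in> {1..n}" and "\<pi> p = n"
  shows "\<pi> ` {p + 1..n} = {1..n} - insert n (\<pi> ` {1..p - 1})"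
proof -
  have "{p + 1..n} = {1..n} - insert p {1..p - 1}"
    using assms(2) by auto
  then have "\<pi> ` {p + 1..n} = \<pi> ` {1..n} - \<pi> ` insert p {1..p - 1}"
    using image_set_diff[OF permutes_inj[OF assms(1)]] by simp
  then show ?thesis
    using permutes_image[OF assms(1)] assms(3) by simp
qed

lemma cDes_perm_subset: "cDes_perm n \<pi> \<subseteq> {1..n}"
  by (auto simp: cDes_perm_def)

lemma cDes_perm_less: "i \<in> {1..<n} \<Longrightarrow> i \<in> cDes_perm n \<pi> \<longleftrightarrow> \<pi> (Suc i) < \<pi> i"
  by (auto simp: cDes_perm_def)

lemma cDes_perm_last: "n \<ge> 1 \<Longrightarrow> n \<in> cDes_perm n \<pi> \<longleftrightarrow> \<pi> 1 < \<pi> n"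
  by (auto simp: cDes_perm_def)

lemma notin_cDes_perm_less:
  assumes "\<pi> permutes {1..n}" and "i \<in> {1..<n}"
  shows "i \<notin> cDes_perm n \<pi> \<longleftrightarrow> \<pi> i < \<pi> (Suc i)"
proof -
  have "\<pi> i \<noteq> \<pi> (Suc i)"
    using permutes_inj[OF assms(1)] by (metis injD n_not_Suc_n)
  then show ?thesis
    using cDes_perm_less[OF assms(2)] by auto
qed

lemma max_pos_run_start:
  assumes "n \<ge> 2" and perm: "\<pi> permutes {1..n}" and p: "\<pi> p = n"
  shows "p \<in> run_starts n (cDes_perm n \<pi>)"
proof -
  have pn: "p \<in> {1..n}"
    using permutes_preimage_max[OF perm p] assms(1) by simp
  have less: "\<pi> x < n" if "x \<in> {1..n}" "x \<noteq> p" for x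
    using permutes_less_max[OF perm p that] .
  have "p \<in> cDes_perm n \<pi>"
  proof (cases "p = n")
    case True
    then show ?thesis
      using less[of 1] assms(1) p cDes_perm_last[of n \<pi>] by auto
  next
    case False
    then have "p \<in> {1..<n}" "\<pi> (Suc p) < n"
      using less[of "Suc p"] pn by auto
    then show ?thesis
      using p cDes_perm_less[of p n \<pi>] by simp
  qed
  moreover have "cyc_pred n p \<notin> cDes_perm n \<pi>"
  proof (cases "p = 1")
    case True
    then show ?thesis
      using less[of n] assms(1) p cDes_perm_last[of n \<pi>] by (auto simp: cyc_pred_def)
  next
    case False
    then have "p - 1 \<in> {1..<n}" "Suc (p - 1) = p" "cyc_pred n p = p - 1"
      using pn by (auto simp: cyc_pred_def)
    moreover have "\<pi> (p - 1) < n"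
      using less[of "p - 1"] \<open>p - 1 \<in> {1..<n}\<close> by auto
    ultimately show ?thesis
      using p cDes_perm_less[of "p - 1" n \<pi>] by simp
  qed
  ultimately show ?thesis
    using pn by (simp add: run_starts_def)
qed

lemma arc_perm_image_prefix:
  assumes arc: "arc_perm n \<pi>" and p: "p \<in> {1..n}" "\<pi> p = n" and j: "1 \<le> j" "j < p"
  shows "\<exists>l. \<pi> ` {1..j} = {l..<l + j} \<and> 1 \<le> l \<and> l + j \<le> n"
proof -
  have perm: "\<pi> permutes {1..n}"
    using arc by (rule arc_perm_permutes)
  have "cyc_interval n (\<pi> ` {1..j})"
    using arc j p(1) unfolding arc_perm_def by auto
  moreover have "n \<notin> \<pi> ` {1..j}"
    using permutes_less_max[OF perm p(2)] j p(1) by fastforce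
  moreover have "card (\<pi> ` {1..j}) = j"
    using card_image[OF permutes_inj_on[OF perm]] by simp
  ultimately show ?thesis
    using cyc_interval_without_max[of n "\<pi> ` {1..j}"] p(1) by auto
qed

lemma arc_perm_image_suffix:
  assumes arc: "arc_perm n \<pi>" and p: "p \<in> {1..n}" "\<pi> p = n" and j: "p < j" "j \<le> n"
  shows "\<exists>l. \<pi> ` {j..n} = {l..<l + (n + 1 - j)}"
proof -
  have perm: "\<pi> permutes {1..n}"
    using arc by (rule arc_perm_permutes)
  have "{j..n} = {1..n} - {1..j - 1}" and "j - 1 \<in> {1..n}"
    using j p(1) by auto
  then have "\<pi> ` {j..n} = {1..n} - \<pi> ` {1..j - 1}"
    using inj_on_image_set_diff[OF permutes_inj_on[OF perm], of "{1..n}" "{1..j - 1}"]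
      permutes_image[OF perm] by auto
  moreover have "cyc_interval n (\<pi> ` {1..j - 1})"
    using arc \<open>j - 1 \<in> {1..n}\<close> unfolding arc_perm_def by blast
  ultimately have "cyc_interval n (\<pi> ` {j..n})"
    using cyc_interval_complement p(1) by auto
  moreover have "n \<notin> \<pi> ` {j..n}"
  proof
    assume "n \<in> \<pi> ` {j..n}"
    then obtain x where x: "x \<in> {j..n}" "\<pi> x = n"
      by blast
    then have "\<pi> x < n"
      using permutes_less_max[OF perm p(2), of x] j p(1) by auto
    then show False
      using x(2) by simp
  qed
  moreover have "card (\<pi> ` {j..n}) = n + 1 - j"
    using card_image[OF permutes_inj_on[OF perm]] by simp
  ultimately show ?thesis
    using cyc_interval_without_max[of n "\<pi> ` {j..n}"] p(1) by auto
qed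

lemma arc_perm_image_before_max_cases:
  assumes "n \<ge> 2" and arc: "arc_perm n \<pi>" and p: "p \<in> {2..n}" "\<pi> p = n"
  shows "\<pi> ` {1..p - 1} = {1..<p} \<or> \<pi> ` {1..p - 1} = {n + 1 - p..<n}"
proof -
  have perm: "\<pi> permutes {1..n}"
    using arc by (rule arc_perm_permutes)
  have "p \<in> {1..n}" "1 \<le> p - 1" "p - 1 < p"
    using p(1) by auto
  then obtain l where l: "\<pi> ` {1..p - 1} = {l..<l + (p - 1)}" "1 \<le> l" "l + (p - 1) \<le> n"
    using arc_perm_image_prefix[OF arc _ p(2)] by blast
  have "{1..p} = insert p {1..p - 1}"
    using p(1) by auto
  then have up_to_max: "\<pi> ` {1..p} = insert n (\<pi> ` {1..p - 1})"
    using p(2) by simp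
  have "cyc_interval n (\<pi> ` {1..p})"
    using arc p(1) unfolding arc_perm_def by auto
  moreover have "n \<in> \<pi> ` {1..p}"
    using up_to_max by simp
  moreover have "card (\<pi> ` {1..p}) \<ge> 2"
    using card_image[OF permutes_inj_on[OF perm]] p(1) by simp
  ultimately have "1 \<in> \<pi> ` {1..p} \<or> n - 1 \<in> \<pi> ` {1..p}"
    by (rule cyc_interval_max_neighbour[OF assms(1)])
  then have "1 \<in> {l..<l + (p - 1)} \<or> n - 1 \<in> {l..<l + (p - 1)}"
    using up_to_max l(1) assms(1) by auto
  then have "l = 1 \<or> l = n + 1 - p"
    using l(2,3) by auto
  then show ?thesis
    using l(1) p(1) by auto
qed

lemma arc_perm_image_before_max:
  assumes "n \<ge> 2" and arc: "arc_perm n \<pi>" and p: "p \<in> {2..n}" "\<pi> p = n"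
  shows "\<pi> ` {1..p - 1} = (if n \<in> cDes_perm n \<pi> then {1..<p} else {n + 1 - p..<n})"
proof -
  note low_or_high = arc_perm_image_before_max_cases[OF assms]
  have perm: "\<pi> permutes {1..n}"
    using arc by (rule arc_perm_permutes)
  show ?thesis
  proof (cases "p = n")
    case True
    then show ?thesis
      using low_or_high by auto
  next
    case False
    have first: "\<pi> 1 \<in> \<pi> ` {1..p - 1}"
      using p(1) by auto
    have "n \<notin> {1..p - 1}"
      using p(1) by auto
    then have last: "\<pi> n \<notin> \<pi> ` {1..p - 1}"
      using inj_image_mem_iff[OF permutes_inj[OF perm]] by simp
    have "\<pi> n \<in> {1..<n}"
      using permutes_less_max[OF perm p(2), of n] permutes_in_image[OF perm, of n] False assms(1) by auto
    from low_or_high show ?thesis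
    proof
      assume low: "\<pi> ` {1..p - 1} = {1..<p}"
      then have "\<pi> 1 < \<pi> n"
        using first last \<open>\<pi> n \<in> {1..<n}\<close> by auto
      then show ?thesis
        using low cDes_perm_last[of n \<pi>] assms(1) by simp
    next
      assume high: "\<pi> ` {1..p - 1} = {n + 1 - p..<n}"
      then have "\<pi> n < \<pi> 1"
        using first last \<open>\<pi> n \<in> {1..<n}\<close> by auto
      then show ?thesis
        using high cDes_perm_last[of n \<pi>] assms(1) p(1) False by auto
    qed
  qed
qed

lemma arc_perm_prefix_intervals:
  assumes "arc_perm n \<pi>" and "p \<in> {1..n}" and "\<pi> p = n"
  shows "prefix_intervals \<pi> (p - 1)"
  unfolding prefix_intervals_def
proof
  fix j assume "j \<in> {1..p - 1}"
  then have "1 \<le> j" "j < p"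
    by auto
  then show "\<exists>l. \<pi> ` {1..j} = {l..<l + j}"
    using arc_perm_image_prefix[OF assms] by blast
qed

lemma arc_perm_reversed_suffix_intervals:
  assumes "arc_perm n \<pi>" and p: "p \<in> {1..n}" and "\<pi> p = n"
  shows "prefix_intervals (\<lambda>i. \<pi> (n + 1 - i)) (n - p)"
  unfolding prefix_intervals_def
proof
  fix j assume j: "j \<in> {1..n - p}"
  then have "p < n + 1 - j" "n + 1 - j \<le> n" "n + 1 - (n + 1 - j) = j"
    by auto
  then obtain l where "\<pi> ` {n + 1 - j..n} = {l..<l + j}"
    using arc_perm_image_suffix[OF assms] by metis
  then show "\<exists>l. (\<lambda>i. \<pi> (n + 1 - i)) ` {1..j} = {l..<l + j}"
    using j p image_reverse_atLeastAtMost[of j n \<pi>] by auto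
qed

context
  fixes n p :: nat and \<pi>1 \<pi>2 :: "nat \<Rightarrow> nat"
  assumes n: "n \<ge> 2" and arc1: "arc_perm n \<pi>1" and arc2: "arc_perm n \<pi>2"
    and p: "p \<in> {1..n}" "\<pi>1 p = n" "\<pi>2 p = n" and cDes: "cDes_perm n \<pi>1 = cDes_perm n \<pi>2"
begin

lemma arc_perm_image_before_max_eq: "\<pi>1 ` {1..p - 1} = \<pi>2 ` {1..p - 1}"
  using arc_perm_image_before_max[OF n arc1, of p] arc_perm_image_before_max[OF n arc2, of p] p cDes
  by (cases "p = 1") auto

lemma arc_perm_eq_before_max: "\<forall>i\<in>{1..p - 1}. \<pi>1 i = \<pi>2 i"
  using cDes p cDes_perm_less[of _ n \<pi>1] cDes_perm_less[of _ n \<pi>2]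
  by (intro prefix_intervals_unique[OF arc_perm_prefix_intervals[OF arc1 p(1,2)]
        arc_perm_prefix_intervals[OF arc2 p(1,3)] arc_perm_image_before_max_eq]) auto

lemma arc_perm_eq_after_max: "\<forall>i\<in>{1..n - p}. \<pi>1 (n + 1 - i) = \<pi>2 (n + 1 - i)"
proof -
  have perm1: "\<pi>1 permutes {1..n}" and perm2: "\<pi>2 permutes {1..n}"
    using arc_perm_permutes[OF arc1] arc_perm_permutes[OF arc2] .
  note before = arc_perm_image_before_max_eq
  show ?thesis
  proof (rule prefix_intervals_unique[OF arc_perm_reversed_suffix_intervals[OF arc1 p(1,2)]
        arc_perm_reversed_suffix_intervals[OF arc2 p(1,3)]])
    have "n + 1 - (n - p) = p + 1"
      using p(1) by auto
    then have "(\<lambda>i. \<pi>1 (n + 1 - i)) ` {1..n - p} = \<pi>1 ` {p + 1..n}"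
      and "(\<lambda>i. \<pi>2 (n + 1 - i)) ` {1..n - p} = \<pi>2 ` {p + 1..n}"
      using image_reverse_atLeastAtMost[of "n - p" n \<pi>1] image_reverse_atLeastAtMost[of "n - p" n \<pi>2]
      by simp_all
    then show "(\<lambda>i. \<pi>1 (n + 1 - i)) ` {1..n - p} = (\<lambda>i. \<pi>2 (n + 1 - i)) ` {1..n - p}"
      using permutes_image_after_max[OF perm1 p(1,2)] permutes_image_after_max[OF perm2 p(1,3)] before
      by simp
  next
    fix i assume "i \<in> {1..<n - p}"
    then have "n - i \<in> {1..<n}" "Suc (n - i) = n + 1 - i" "n + 1 - Suc i = n - i"
      by auto
    then show "\<pi>1 (n + 1 - Suc i) < \<pi>1 (n + 1 - i) \<longleftrightarrow> \<pi>2 (n + 1 - Suc i) < \<pi>2 (n + 1 - i)"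
      using notin_cDes_perm_less[OF perm1, of "n - i"] notin_cDes_perm_less[OF perm2, of "n - i"] cDes
      by simp
  qed
qed

lemma arc_perm_eqI: "\<pi>1 = \<pi>2"
proof -
  have perm1: "\<pi>1 permutes {1..n}" and perm2: "\<pi>2 permutes {1..n}"
    using arc_perm_permutes[OF arc1] arc_perm_permutes[OF arc2] .
  note prefix_eq = arc_perm_eq_before_max and suffix_eq = arc_perm_eq_after_max
  show ?thesis
  proof
    fix x
    consider "x \<in> {1..p - 1}" | "x = p" | "x \<in> {p + 1..n}" | "x \<notin> {1..n}"
      using p(1) by fastforce
    then show "\<pi>1 x = \<pi>2 x"
    proof cases
      case 3
      then have "n + 1 - x \<in> {1..n - p}" "n + 1 - (n + 1 - x) = x"
        by auto
      then show ?thesis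
        using suffix_eq by (metis (no_types))
    qed (use prefix_eq p permutes_not_in[OF perm1] permutes_not_in[OF perm2] in auto)
  qed
qed

end

definition arc_glue :: "nat \<Rightarrow> nat \<Rightarrow> (nat \<Rightarrow> nat) \<Rightarrow> (nat \<Rightarrow> nat) \<Rightarrow> nat \<Rightarrow> nat" where
  "arc_glue n p \<alpha> \<gamma> x =
    (if 1 \<le> x \<and> x < p then \<alpha> x else if x = p then n
     else if p < x \<and> x \<le> n then \<gamma> (n + 1 - x) else x)"

lemma arc_glue_image_prefix: "j < p \<Longrightarrow> arc_glue n p \<alpha> \<gamma> ` {1..j} = \<alpha> ` {1..j}"
  by (auto simp: arc_glue_def intro!: image_cong)

lemma arc_glue_image_suffix:
  assumes "t \<le> n - p"
  shows "arc_glue n p \<alpha> \<gamma> ` {n + 1 - t..n} = \<gamma> ` {1..t}"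
proof -
  have "t \<le> n"
    using assms by simp
  then have "arc_glue n p \<alpha> \<gamma> ` {n + 1 - t..n} = (\<lambda>i. arc_glue n p \<alpha> \<gamma> (n + 1 - i)) ` {1..t}"
    by (rule image_reverse_atLeastAtMost[symmetric])
  also have "\<dots> = \<gamma> ` {1..t}"
    using assms by (intro image_cong) (auto simp: arc_glue_def)
  finally show ?thesis .
qed

lemma arc_glue_permutes:
  assumes p: "p \<in> {1..n}" and ranges: "\<alpha> ` {1..p - 1} \<union> \<gamma> ` {1..n - p} = {1..<n}"
  shows "arc_glue n p \<alpha> \<gamma> permutes {1..n}"
proof -
  let ?\<pi> = "arc_glue n p \<alpha> \<gamma>"
  have "n + 1 - (n - p) = p + 1"
    using p by auto
  then have suffix: "?\<pi> ` {p + 1..n} = \<gamma> ` {1..n - p}"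
    using arc_glue_image_suffix[of "n - p" n p \<alpha> \<gamma>] by simp
  have prefix: "?\<pi> ` {1..p - 1} = \<alpha> ` {1..p - 1}"
    using p by (intro arc_glue_image_prefix) auto
  have split: "{1..n} = {1..p - 1} \<union> {p} \<union> {p + 1..n}"
    using p by auto
  have "?\<pi> ` {1..n} = \<alpha> ` {1..p - 1} \<union> {n} \<union> \<gamma> ` {1..n - p}"
    unfolding split image_Un prefix suffix by (simp add: arc_glue_def)
  also have "\<dots> = insert n (\<alpha> ` {1..p - 1} \<union> \<gamma> ` {1..n - p})"
    by blast
  also have "\<dots> = {1..n}"
    unfolding ranges using p by auto
  finally have image: "?\<pi> ` {1..n} = {1..n}" .
  then have "inj_on ?\<pi> {1..n}"
    by (simp add: inj_on_iff_eq_card)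
  then have "bij_betw ?\<pi> {1..n} {1..n}"
    using image by (simp add: bij_betw_def)
  then show ?thesis
    by (rule bij_imp_permutes) (use p in \<open>auto simp: arc_glue_def\<close>)
qed

lemma arc_perm_arc_glue:
  assumes p: "p \<in> {1..n}" and \<alpha>: "prefix_intervals \<alpha> (p - 1)" and \<gamma>: "prefix_intervals \<gamma> (n - p)"
    and ranges: "\<alpha> ` {1..p - 1} \<union> \<gamma> ` {1..n - p} = {1..<n}"
  shows "arc_perm n (arc_glue n p \<alpha> \<gamma>)"
proof -
  let ?\<pi> = "arc_glue n p \<alpha> \<gamma>"
  have perm: "?\<pi> permutes {1..n}"
    using p ranges by (rule arc_glue_permutes)
  moreover have "cyc_interval n (?\<pi> ` {1..j})" if j: "j \<in> {1..n}" for j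
  proof (cases "j < p")
    case True
    have "\<alpha> ` {1..p - 1} \<subseteq> {1..<n}" "j \<le> p - 1"
      using ranges True by auto
    then show ?thesis
      using arc_glue_image_prefix[OF True] prefix_intervals_cyc_interval[OF \<alpha>] by simp
  next
    case False
    have "{1..j} = {1..n} - {n + 1 - (n - j)..n}"
      using j by auto
    then have complement: "?\<pi> ` {1..j} = {1..n} - \<gamma> ` {1..n - j}"
      using image_set_diff[OF permutes_inj[OF perm]] permutes_image[OF perm]
        arc_glue_image_suffix[of "n - j" n p \<alpha> \<gamma>] False by simp
    have "\<gamma> ` {1..n - p} \<subseteq> {1..<n}" "n - j \<le> n - p"
      using ranges False by auto
    then have "cyc_interval n (\<gamma> ` {1..n - j})"
      by (rule prefix_intervals_cyc_interval[OF \<gamma>])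
    then show ?thesis
      unfolding complement using cyc_interval_complement p by auto
  qed
  ultimately show ?thesis
    by (simp add: arc_perm_def)
qed

lemma cDes_arc_glue_less:
  assumes p: "p \<in> {1..n}" and i: "i \<in> {1..<n}"
    and "\<alpha> ` {1..p - 1} \<subseteq> {1..<n}" and "\<gamma> ` {1..n - p} \<subseteq> {1..<n}"
  shows "i \<in> cDes_perm n (arc_glue n p \<alpha> \<gamma>) \<longleftrightarrow>
    (if Suc i < p then \<alpha> (Suc i) < \<alpha> i else if Suc i = p then False
     else if i = p then True else \<gamma> (n - i) < \<gamma> (n + 1 - i))"
proof -
  have "\<alpha> i \<in> {1..<n}" if "Suc i = p"
    by (rule subsetD[OF assms(3) imageI]) (use that i in auto)
  moreover have "\<gamma> (n - p) \<in> {1..<n}" if "i = p"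
    by (rule subsetD[OF assms(4) imageI]) (use that i in auto)
  ultimately show ?thesis
    using p i by (auto simp: cDes_perm_less arc_glue_def Suc_diff_Suc)
qed

lemma cDes_arc_glue_last:
  assumes "n \<ge> 2" and p: "p \<in> {1..n}"
    and "\<alpha> ` {1..p - 1} \<subseteq> {1..<n}" and "\<gamma> ` {1..n - p} \<subseteq> {1..<n}"
  shows "n \<in> cDes_perm n (arc_glue n p \<alpha> \<gamma>) \<longleftrightarrow> p = n \<or> (p \<noteq> 1 \<and> \<alpha> 1 < \<gamma> 1)"
proof -
  have "\<alpha> 1 \<in> {1..<n}" if "p \<noteq> 1"
    by (rule subsetD[OF assms(3) imageI]) (use that p in auto)
  moreover have "\<gamma> 1 \<in> {1..<n}" if "p \<noteq> n"
    by (rule subsetD[OF assms(4) imageI]) (use that p in auto)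
  ultimately show ?thesis
    using assms(1) p by (auto simp: cDes_perm_last arc_glue_def)
qed

lemma cDes_arc_glue_less_iff:
  assumes p: "p \<in> run_starts n J" and i: "i \<in> {1..<n}"
    and \<alpha>: "\<alpha> ` {1..p - 1} \<subseteq> {1..<n}" "\<forall>i\<in>{1..<p - 1}. \<alpha> (Suc i) < \<alpha> i \<longleftrightarrow> i \<in> J"
    and \<gamma>: "prefix_intervals \<gamma> (n - p)" "\<gamma> ` {1..n - p} \<subseteq> {1..<n}"
      "\<forall>t\<in>{1..<n - p}. \<gamma> (Suc t) < \<gamma> t \<longleftrightarrow> n - t \<notin> J"
  shows "i \<in> cDes_perm n (arc_glue n p \<alpha> \<gamma>) \<longleftrightarrow> i \<in> J"
proof -
  have pn: "p \<in> {1..n}" and "p \<in> J" and pred: "cyc_pred n p \<notin> J"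
    using p by (auto simp: run_starts_def)
  note glue = cDes_arc_glue_less[OF pn i \<alpha>(1) \<gamma>(2)]
  consider "Suc i < p" | "Suc i = p" | "i = p" | "p < i"
    by linarith
  then show ?thesis
  proof cases
    case 1
    then show ?thesis
      using glue \<alpha>(2) i by auto
  next
    case 2
    then have "cyc_pred n p = i"
      using i by (simp add: cyc_pred_def)
    then show ?thesis
      using glue 2 pred by simp
  next
    case 3
    then show ?thesis
      using glue \<open>p \<in> J\<close> by simp
  next
    case 4
    define t where "t = n - i"
    have t: "t \<in> {1..<n - p}" "Suc t = n + 1 - i" "n - t = i"
      using 4 i by (auto simp: t_def)
    have "\<gamma> t \<noteq> \<gamma> (Suc t)"
      using t(1) by (intro inj_on_contraD[OF prefix_intervals_inj_on[OF \<gamma>(1)]]) auto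
    moreover have "\<gamma> (Suc t) < \<gamma> t \<longleftrightarrow> i \<notin> J"
      using \<gamma>(3) t by auto
    ultimately show ?thesis
      using glue 4 t by (auto simp: t_def)
  qed
qed

lemma cDes_arc_glue_last_iff:
  assumes "n \<ge> 2" and p: "p \<in> run_starts n J"
    and \<alpha>: "\<alpha> ` {1..p - 1} = (if n \<in> J then {1..<p} else {n + 1 - p..<n})"
    and \<gamma>: "\<gamma> ` {1..n - p} = (if n \<in> J then {p..<n} else {1..<n + 1 - p})"
  shows "n \<in> cDes_perm n (arc_glue n p \<alpha> \<gamma>) \<longleftrightarrow> n \<in> J"
proof -
  have pn: "p \<in> {1..n}" and "p \<in> J" and pred: "cyc_pred n p \<notin> J"
    using p by (auto simp: run_starts_def)
  have "\<alpha> ` {1..p - 1} \<subseteq> {1..<n}" "\<gamma> ` {1..n - p} \<subseteq> {1..<n}"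
    unfolding \<alpha> \<gamma> using pn by auto
  note glue = cDes_arc_glue_last[OF assms(1) pn this]
  consider "p = n" | "p = 1" | "p \<noteq> 1" "p \<noteq> n"
    by blast
  then show ?thesis
  proof cases
    case 1
    then show ?thesis
      using glue \<open>p \<in> J\<close> by simp
  next
    case 2
    then show ?thesis
      using glue pred assms(1) by (simp add: cyc_pred_def)
  next
    case 3
    then have "\<alpha> 1 \<in> \<alpha> ` {1..p - 1}" "\<gamma> 1 \<in> \<gamma> ` {1..n - p}"
      using pn by auto
    then show ?thesis
      unfolding \<alpha> \<gamma> using glue 3 by (auto split: if_splits)
  qed
qed

lemma arc_perm_exists:
  assumes "n \<ge> 2" and J: "J \<subseteq> {1..n}" and p: "p \<in> run_starts n J"
  shows "\<exists>\<pi>. arc_perm n \<pi> \<and> \<pi> p = n \<and> cDes_perm n \<pi> = J"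
proof -
  have pn: "p \<in> {1..n}"
    using p by (simp add: run_starts_def)
  define A where "A = (if n \<in> J then {1..<p} else {n + 1 - p..<n})"
  define B where "B = (if n \<in> J then {p..<n} else {1..<n + 1 - p})"
  obtain \<alpha> where \<alpha>: "prefix_intervals \<alpha> (p - 1)" "\<alpha> ` {1..p - 1} = A"
    "\<forall>i\<in>{1..<p - 1}. \<alpha> (Suc i) < \<alpha> i \<longleftrightarrow> i \<in> J"
    using prefix_intervals_exists[of "p - 1" "if n \<in> J then 1 else n + 1 - p" J] pn
    by (auto simp: A_def split: if_splits)
  obtain \<gamma> where \<gamma>: "prefix_intervals \<gamma> (n - p)" "\<gamma> ` {1..n - p} = B"
    "\<forall>t\<in>{1..<n - p}. \<gamma> (Suc t) < \<gamma> t \<longleftrightarrow> n - t \<notin> J"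
    using prefix_intervals_exists[of "n - p" "if n \<in> J then p else 1" "{t. n - t \<notin> J}"] pn
    by (auto simp: B_def split: if_splits)
  have AB: "A \<union> B = {1..<n}" "A \<subseteq> {1..<n}" "B \<subseteq> {1..<n}"
    using pn by (auto simp: A_def B_def)
  define \<pi> where "\<pi> = arc_glue n p \<alpha> \<gamma>"
  have "cDes_perm n \<pi> = J"
  proof (rule set_eqI)
    fix i
    consider "i \<in> {1..<n}" | "i = n" | "i \<notin> {1..n}"
      by fastforce
    then show "i \<in> cDes_perm n \<pi> \<longleftrightarrow> i \<in> J"
    proof cases
      case 1
      then show ?thesis
        unfolding \<pi>_def using cDes_arc_glue_less_iff[OF p 1 _ \<alpha>(3) \<gamma>(1) _ \<gamma>(3)] \<alpha>(2) \<gamma>(2) AB by simp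
    next
      case 2
      then show ?thesis
        unfolding \<pi>_def using cDes_arc_glue_last_iff[OF assms(1) p] \<alpha>(2) \<gamma>(2) by (simp add: A_def B_def)
    next
      case 3
      then show ?thesis
        using J cDes_perm_subset[of n \<pi>] by blast
    qed
  qed
  moreover have "arc_perm n \<pi>"
    unfolding \<pi>_def using arc_perm_arc_glue[OF pn \<alpha>(1) \<gamma>(1)] \<alpha>(2) \<gamma>(2) AB by simp
  moreover have "\<pi> p = n"
    by (simp add: \<pi>_def arc_glue_def)
  ultimately show ?thesis
    by blast
qed

lemma card_arc_perms_cDes:
  assumes "n \<ge> 2" and J: "J \<subseteq> {1..n}"
  shows "card {\<pi> \<in> arc_perms n. cDes_perm n \<pi> = J} = card (run_starts n J)"
proof -
  have "bij_betw (\<lambda>\<pi>. inv \<pi> n) {\<pi> \<in> arc_perms n. cDes_perm n \<pi> = J} (run_starts n J)"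
  proof (rule bij_betwI')
    fix \<pi> assume "\<pi> \<in> {\<pi> \<in> arc_perms n. cDes_perm n \<pi> = J}"
    then have perm: "\<pi> permutes {1..n}" and "cDes_perm n \<pi> = J"
      by (auto simp: arc_perms_def arc_perm_def)
    then show "inv \<pi> n \<in> run_starts n J"
      using max_pos_run_start[OF assms(1) perm] permutes_inverses(1)[OF perm] by simp
  next
    fix \<pi>1 \<pi>2
    assume "\<pi>1 \<in> {\<pi> \<in> arc_perms n. cDes_perm n \<pi> = J}" and "\<pi>2 \<in> {\<pi> \<in> arc_perms n. cDes_perm n \<pi> = J}"
    then have arc: "arc_perm n \<pi>1" "arc_perm n \<pi>2" and cDes: "cDes_perm n \<pi>1 = cDes_perm n \<pi>2"
      by (auto simp: arc_perms_def)
    have "\<pi>1 (inv \<pi>1 n) = n"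
      using permutes_inverses(1)[OF arc_perm_permutes[OF arc(1)]] .
    moreover have "\<pi>2 (inv \<pi>1 n) = n" if "inv \<pi>1 n = inv \<pi>2 n"
      using permutes_inverses(1)[OF arc_perm_permutes[OF arc(2)]] that by simp
    moreover have "inv \<pi>1 n \<in> {1..n}"
      using permutes_preimage_max[OF arc_perm_permutes[OF arc(1)]]
        permutes_inverses(1)[OF arc_perm_permutes[OF arc(1)]] assms(1) by simp
    ultimately show "inv \<pi>1 n = inv \<pi>2 n \<longleftrightarrow> \<pi>1 = \<pi>2"
      using arc_perm_eqI[OF assms(1) arc] cDes by blast
  next
    fix p assume "p \<in> run_starts n J"
    then obtain \<pi> where \<pi>: "arc_perm n \<pi>" "\<pi> p = n" "cDes_perm n \<pi> = J"
      using arc_perm_exists[OF assms(1) J] by blast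
    then have "inv \<pi> n = p"
      using permutes_inverses(2)[OF arc_perm_permutes[OF \<pi>(1)], of p] by simp
    then show "\<exists>\<pi>\<in>{\<pi> \<in> arc_perms n. cDes_perm n \<pi> = J}. p = inv \<pi> n"
      using \<pi> by (auto simp: arc_perms_def)
  qed
  then show ?thesis
    by (rule bij_betw_same_card)
qed

section \<open>A family of disconnected skew shapes\<close>

lemma lift_Suc_less_below:
  fixes f :: "nat \<Rightarrow> 'a::order"
  assumes step: "\<And>k. Suc k < m \<Longrightarrow> f k < f (Suc k)" and "i < j" and "j < m"
  shows "f i < f j"
  using assms(2,3)
proof (induction j)
  case 0
  then show ?case by simp
next
  case (Suc j)
  show ?case
  proof (cases "i = j")
    case True
    then show ?thesis
      using step Suc.prems by simp
  next
    case False
    then have "f i < f j"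
      using Suc by simp
    also have "f j < f (Suc j)"
      using step Suc.prems by simp
    finally show ?thesis .
  qed
qed

lemma sorted_list_of_set_image_nth:
  fixes f :: "nat \<Rightarrow> 'a::linorder"
  assumes "\<And>i j. i < j \<Longrightarrow> j < m \<Longrightarrow> f i < f j" and "t < m"
  shows "sorted_list_of_set (f ` {..<m}) ! t = f t"
proof -
  have "sorted_wrt (<) (map f [0..<m])"
    using assms(1) by (auto simp: sorted_wrt_iff_nth_less)
  moreover have "set (map f [0..<m]) = f ` {..<m}"
    by (simp add: lessThan_atLeast0)
  ultimately have "sorted_list_of_set (f ` {..<m}) = map f [0..<m]"
    using strict_sorted_equal[of "map f [0..<m]" "sorted_list_of_set (f ` {..<m})"] by simp
  then show ?thesis
    using assms(2) by simp
qed

lemma sorted_list_of_set_nth_less: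
  "finite C \<Longrightarrow> i < j \<Longrightarrow> j < card C \<Longrightarrow> sorted_list_of_set C ! i < sorted_list_of_set C ! j"
  using sorted_wrt_nth_less[OF strict_sorted_list_of_set[of C], of i j] by simp

lemma image_nth_sorted_list_of_set:
  "finite C \<Longrightarrow> (\<lambda>t. sorted_list_of_set C ! t) ` {..<card C} = C"
  using set_conv_nth[of "sorted_list_of_set C"] by (auto simp: image_def)

lemma inj_on_image_entries:
  fixes f :: "nat \<Rightarrow> nat" and C :: "nat set"
  assumes "inj_on f {1..n}" and "f ` {1..n} \<subseteq> {1..n}" and "p \<in> {1..n}" and "C \<subseteq> {1..n} - {p}"
  shows "f p \<in> {1..n}" and "f ` C \<subseteq> {1..n} - {f p}" and "card (f ` C) = card C"
proof -
  show "f p \<in> {1..n}"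
    using assms(2,3) by blast
  have "f p \<notin> f ` C"
    using inj_on_image_mem_iff[OF assms(1,3)] assms(4) by auto
  then show "f ` C \<subseteq> {1..n} - {f p}"
    using assms(2,4) by blast
  show "card (f ` C) = card C"
    using card_image[OF inj_on_subset[OF assms(1)]] assms(4) by blast
qed

text \<open>For \<open>b < n\<close> and \<open>r = n - 1 - b\<close>, the skew shape \<open>(r + 2, (r + 1)\<^sup>b, r) / (r + 1, r\<^sup>b)\<close>:
  a single cell, a column of \<open>b\<close> cells and a row of \<open>r\<close> cells, no two of which share an edge.\<close>

locale dot_col_row =
  fixes n b :: nat
  assumes n_ge_2: "n \<ge> 2" and b_less_n: "b < n"
begin

definition r :: nat where
  "r = n - 1 - b"

definition dot :: "nat \<times> nat" where
  "dot = (0, Suc r)"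

definition col_cell :: "nat \<Rightarrow> nat \<times> nat" where
  "col_cell t = (Suc t, r)"

definition row_cell :: "nat \<Rightarrow> nat \<times> nat" where
  "row_cell t = (Suc b, t)"

definition col_cells :: "(nat \<times> nat) set" where
  "col_cells = col_cell ` {..<b}"

definition row_cells :: "(nat \<times> nat) set" where
  "row_cells = row_cell ` {..<r}"

definition cells :: "(nat \<times> nat) set" where
  "cells = insert dot (col_cells \<union> row_cells)"

definition outer :: "(nat \<times> nat) set" where
  "outer = {(i, j). (i = 0 \<and> j \<le> Suc r) \<or> (1 \<le> i \<and> i \<le> b \<and> j \<le> r) \<or> (i = Suc b \<and> j < r)}"

definition inner :: "(nat \<times> nat) set" where
  "inner = {(i, j). (i = 0 \<and> j \<le> r) \<or> (1 \<le> i \<and> i \<le> b \<and> j < r)}"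

lemma n_eq: "n = Suc (b + r)"
  using n_ge_2 b_less_n by (simp add: r_def)

lemma mem_cells_iff: "c \<in> cells \<longleftrightarrow> c = dot \<or> (\<exists>t<b. c = col_cell t) \<or> (\<exists>t<r. c = row_cell t)"
  by (auto simp: cells_def col_cells_def row_cells_def)

lemma dot_in_cells: "dot \<in> cells"
  by (simp add: cells_def)

lemma col_cells_subset: "col_cells \<subseteq> cells"
  by (auto simp: cells_def)

lemma dot_notin: "dot \<notin> col_cells" "dot \<notin> row_cells"
  by (auto simp: col_cells_def row_cells_def dot_def col_cell_def row_cell_def)

lemma col_cells_Int_row_cells: "col_cells \<inter> row_cells = {}"
  by (auto simp: col_cells_def row_cells_def col_cell_def row_cell_def)

lemma card_col_cells: "card col_cells = b"
  unfolding col_cells_def by (subst card_image) (auto simp: inj_on_def col_cell_def)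

lemma card_row_cells: "card row_cells = r"
  unfolding row_cells_def by (subst card_image) (auto simp: inj_on_def row_cell_def)

lemma finite_cells: "finite col_cells" "finite row_cells" "finite cells"
  by (auto simp: col_cells_def row_cells_def cells_def)

lemma card_cells: "card cells = n"
proof -
  have "card cells = Suc (card (col_cells \<union> row_cells))"
    unfolding cells_def using dot_notin finite_cells by simp
  also have "card (col_cells \<union> row_cells) = b + r"
    using card_Un_disjoint[OF finite_cells(1,2) col_cells_Int_row_cells] card_col_cells card_row_cells
    by simp
  finally show ?thesis
    using n_eq by simp
qed

lemma outer_diff_inner: "outer - inner = cells"
proof (rule set_eqI)
  fix c :: "nat \<times> nat"
  obtain i j where c: "c = (i, j)"
    by force
  show "c \<in> outer - inner \<longleftrightarrow> c \<in> cells"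
    unfolding c mem_cells_iff
    by (cases i) (auto simp: outer_def inner_def dot_def col_cell_def row_cell_def)
qed

lemma skew_shape_outer_inner: "skew_shape outer inner"
proof -
  have box: "outer \<subseteq> {0..Suc b} \<times> {0..Suc r}" and "inner \<subseteq> outer"
    by (auto simp: outer_def inner_def)
  have "finite outer"
    by (rule finite_subset[OF box]) simp
  moreover have "finite inner"
    by (rule finite_subset[OF \<open>inner \<subseteq> outer\<close> \<open>finite outer\<close>])
  ultimately show ?thesis
    unfolding skew_shape_def young_def using \<open>inner \<subseteq> outer\<close>
    by (auto simp: outer_def inner_def)
qed

text \<open>The single cell is isolated.\<close>

lemma not_connected_ribbon_cells: "\<not> connected_ribbon cells"
proof
  assume "connected_ribbon cells"
  then have connected: "connected_cells cells"
    by (simp add: connected_ribbon_def)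
  have "col_cells \<union> row_cells \<noteq> {}"
    using card_col_cells card_row_cells n_eq n_ge_2 by auto
  then obtain d where "d \<in> col_cells \<union> row_cells"
    by blast
  then have d: "d \<in> cells" "d \<noteq> dot"
    using dot_notin by (auto simp: cells_def)
  let ?R = "\<lambda>x y. x \<in> cells \<and> y \<in> cells \<and> cell_adj x y"
  have "?R\<^sup>*\<^sup>* dot d"
    using connected dot_in_cells d(1) unfolding connected_cells_def by blast
  moreover have "?R\<^sup>*\<^sup>* dot y \<Longrightarrow> y = dot" for y
  proof (induction rule: rtranclp_induct)
    case base
    then show ?case by simp
  next
    case (step y z)
    then have "z \<in> cells" "cell_adj dot z"
      by auto
    then show ?case
      unfolding mem_cells_iff by (auto simp: cell_adj_def dot_def col_cell_def row_cell_def)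
  qed
  ultimately show False
    using d(2) by blast
qed

lemma cells_right_neighbour:
  assumes "(i, j) \<in> cells" and "(i, Suc j) \<in> cells"
  shows "\<exists>t. Suc t < r \<and> (i, j) = row_cell t"
proof -
  have "i = Suc b" and "Suc j < r"
    using assms unfolding mem_cells_iff by (auto simp: dot_def col_cell_def row_cell_def)
  then show ?thesis
    by (auto simp: row_cell_def)
qed

lemma cells_lower_neighbour:
  assumes "(i, j) \<in> cells" and "(Suc i, j) \<in> cells"
  shows "\<exists>t. Suc t < b \<and> (i, j) = col_cell t"
proof -
  have "1 \<le> i" and "i < b" and "j = r"
    using assms unfolding mem_cells_iff by (auto simp: dot_def col_cell_def row_cell_def)
  then have "Suc (i - 1) < b \<and> (i, j) = col_cell (i - 1)"
    by (auto simp: col_cell_def)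
  then show ?thesis ..
qed

lemma increasing_along_rows_iff:
  "(\<forall>i j. (i, j) \<in> cells \<and> (i, Suc j) \<in> cells \<longrightarrow> T (i, j) < T (i, Suc j)) \<longleftrightarrow>
    (\<forall>t. Suc t < r \<longrightarrow> T (row_cell t) < T (row_cell (Suc t)))"
proof
  assume H: "\<forall>i j. (i, j) \<in> cells \<and> (i, Suc j) \<in> cells \<longrightarrow> T (i, j) < T (i, Suc j)"
  show "\<forall>t. Suc t < r \<longrightarrow> T (row_cell t) < T (row_cell (Suc t))"
  proof (intro allI impI)
    fix t assume "Suc t < r"
    then have "(Suc b, t) \<in> cells" "(Suc b, Suc t) \<in> cells"
      unfolding mem_cells_iff row_cell_def by auto
    then show "T (row_cell t) < T (row_cell (Suc t))"
      using H by (simp add: row_cell_def)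
  qed
next
  assume H: "\<forall>t. Suc t < r \<longrightarrow> T (row_cell t) < T (row_cell (Suc t))"
  show "\<forall>i j. (i, j) \<in> cells \<and> (i, Suc j) \<in> cells \<longrightarrow> T (i, j) < T (i, Suc j)"
  proof (intro allI impI)
    fix i j assume "(i, j) \<in> cells \<and> (i, Suc j) \<in> cells"
    then obtain t where "Suc t < r" "(i, j) = row_cell t"
      using cells_right_neighbour by blast
    then show "T (i, j) < T (i, Suc j)"
      using H by (auto simp: row_cell_def)
  qed
qed

lemma increasing_down_columns_iff:
  "(\<forall>i j. (i, j) \<in> cells \<and> (Suc i, j) \<in> cells \<longrightarrow> T (i, j) < T (Suc i, j)) \<longleftrightarrow>
    (\<forall>t. Suc t < b \<longrightarrow> T (col_cell t) < T (col_cell (Suc t)))"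
proof
  assume H: "\<forall>i j. (i, j) \<in> cells \<and> (Suc i, j) \<in> cells \<longrightarrow> T (i, j) < T (Suc i, j)"
  show "\<forall>t. Suc t < b \<longrightarrow> T (col_cell t) < T (col_cell (Suc t))"
  proof (intro allI impI)
    fix t assume "Suc t < b"
    then have "(Suc t, r) \<in> cells" "(Suc (Suc t), r) \<in> cells"
      unfolding mem_cells_iff col_cell_def by auto
    then show "T (col_cell t) < T (col_cell (Suc t))"
      using H by (simp add: col_cell_def)
  qed
next
  assume H: "\<forall>t. Suc t < b \<longrightarrow> T (col_cell t) < T (col_cell (Suc t))"
  show "\<forall>i j. (i, j) \<in> cells \<and> (Suc i, j) \<in> cells \<longrightarrow> T (i, j) < T (Suc i, j)"
  proof (intro allI impI)
    fix i j assume "(i, j) \<in> cells \<and> (Suc i, j) \<in> cells"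
    then obtain t where "Suc t < b" "(i, j) = col_cell t"
      using cells_lower_neighbour by blast
    then show "T (i, j) < T (Suc i, j)"
      using H by (auto simp: col_cell_def)
  qed
qed

lemma syt_cells_iff:
  "syt n cells T \<longleftrightarrow> bij_betw T cells {1..n} \<and> (\<forall>c. c \<notin> cells \<longrightarrow> T c = 0)
     \<and> (\<forall>t. Suc t < b \<longrightarrow> T (col_cell t) < T (col_cell (Suc t)))
     \<and> (\<forall>t. Suc t < r \<longrightarrow> T (row_cell t) < T (row_cell (Suc t)))"
  unfolding syt_def increasing_along_rows_iff increasing_down_columns_iff by blast

lemma syt_col_less: "syt n cells T \<Longrightarrow> t < t' \<Longrightarrow> t' < b \<Longrightarrow> T (col_cell t) < T (col_cell t')"
  using lift_Suc_less_below[of b "\<lambda>t. T (col_cell t)"] by (simp add: syt_cells_iff)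

lemma syt_row_less: "syt n cells T \<Longrightarrow> t < t' \<Longrightarrow> t' < r \<Longrightarrow> T (row_cell t) < T (row_cell t')"
  using lift_Suc_less_below[of r "\<lambda>t. T (row_cell t)"] by (simp add: syt_cells_iff)

lemma syt_bij_betw: "syt n cells T \<Longrightarrow> bij_betw T cells {1..n}"
  by (simp add: syt_def)

lemma syt_entries:
  assumes "syt n cells T"
  shows "T dot \<in> {1..n}" and "T ` col_cells \<subseteq> {1..n} - {T dot}" and "card (T ` col_cells) = b"
proof -
  have bij: "bij_betw T cells {1..n}"
    using assms by (rule syt_bij_betw)
  show "T dot \<in> {1..n}"
    using bij_betw_apply[OF bij dot_in_cells] .
  have "T dot \<notin> T ` col_cells"
    using inj_on_image_mem_iff[OF bij_betw_imp_inj_on[OF bij] dot_in_cells col_cells_subset] dot_notin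
    by simp
  then show "T ` col_cells \<subseteq> {1..n} - {T dot}"
    using bij_betw_imp_surj_on[OF bij] col_cells_subset by blast
  show "card (T ` col_cells) = b"
    using card_image[OF inj_on_subset[OF bij_betw_imp_inj_on[OF bij] col_cells_subset]] card_col_cells
    by simp
qed

lemma syt_image_row_cells:
  assumes "syt n cells T"
  shows "T ` row_cells = {1..n} - insert (T dot) (T ` col_cells)"
proof -
  have bij: "bij_betw T cells {1..n}"
    using assms by (rule syt_bij_betw)
  have "row_cells = cells - insert dot col_cells"
    using dot_notin col_cells_Int_row_cells by (auto simp: cells_def)
  then have "T ` row_cells = T ` cells - T ` insert dot col_cells"
    using inj_on_image_set_diff[OF bij_betw_imp_inj_on[OF bij]] col_cells_subset dot_in_cells by simp
  then show ?thesis
    using bij_betw_imp_surj_on[OF bij] by simp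
qed

definition tableau :: "nat \<Rightarrow> nat set \<Rightarrow> nat \<times> nat \<Rightarrow> nat" where
  "tableau p C c =
    (if c = dot then p
     else if c \<in> col_cells then sorted_list_of_set C ! (fst c - 1)
     else if c \<in> row_cells then sorted_list_of_set ({1..n} - insert p C) ! snd c
     else 0)"

lemma tableau_dot [simp]: "tableau p C dot = p"
  by (simp add: tableau_def)

lemma tableau_col_cell: "t < b \<Longrightarrow> tableau p C (col_cell t) = sorted_list_of_set C ! t"
  by (auto simp: tableau_def col_cells_def dot_def col_cell_def)

lemma tableau_row_cell: "t < r \<Longrightarrow> tableau p C (row_cell t) = sorted_list_of_set ({1..n} - insert p C) ! t"
  by (auto simp: tableau_def col_cells_def row_cells_def dot_def col_cell_def row_cell_def)

lemma
  assumes p: "p \<in> {1..n}" and C: "C \<subseteq> {1..n} - {p}" and card_C: "card C = b"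
  shows syt_tableau: "syt n cells (tableau p C)"
    and tableau_image_col_cells: "tableau p C ` col_cells = C"
proof -
  define R where "R = {1..n} - insert p C"
  have fin: "finite C" "finite R"
    using C by (auto simp: R_def intro: finite_subset)
  have card_R: "card R = r"
  proof -
    have "p \<notin> C"
      using C by blast
    then have "card (insert p C) = Suc b"
      using card_C fin(1) by simp
    moreover have "insert p C \<subseteq> {1..n}"
      using p C by auto
    ultimately show ?thesis
      unfolding R_def using card_Diff_subset[of "insert p C" "{1..n}"] fin(1) n_eq by simp
  qed
  have "tableau p C ` col_cells = (\<lambda>t. sorted_list_of_set C ! t) ` {..<b}"
    unfolding col_cells_def image_image by (rule image_cong) (simp_all add: tableau_col_cell)
  then show col_image: "tableau p C ` col_cells = C"
    using image_nth_sorted_list_of_set[OF fin(1)] card_C by simp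
  have "tableau p C ` row_cells = (\<lambda>t. sorted_list_of_set R ! t) ` {..<r}"
    unfolding row_cells_def image_image by (rule image_cong) (simp_all add: tableau_row_cell R_def)
  then have row_image: "tableau p C ` row_cells = R"
    using image_nth_sorted_list_of_set[OF fin(2)] card_R by simp
  have "tableau p C ` cells = insert p (C \<union> R)"
    unfolding cells_def image_insert image_Un col_image row_image by simp
  also have "\<dots> = {1..n}"
    using p C by (auto simp: R_def)
  finally have image: "tableau p C ` cells = {1..n}" .
  then have "bij_betw (tableau p C) cells {1..n}"
    using card_cells finite_cells(3) by (simp add: bij_betw_def inj_on_iff_eq_card)
  moreover have "tableau p C c = 0" if "c \<notin> cells" for c
    using that by (auto simp: tableau_def cells_def)
  moreover have "tableau p C (col_cell t) < tableau p C (col_cell (Suc t))" if "Suc t < b" for t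
    using that sorted_list_of_set_nth_less[OF fin(1), of t "Suc t"] card_C by (simp add: tableau_col_cell)
  moreover have "tableau p C (row_cell t) < tableau p C (row_cell (Suc t))" if "Suc t < r" for t
    using that sorted_list_of_set_nth_less[OF fin(2), of t "Suc t"] card_R
    by (simp add: tableau_row_cell R_def)
  ultimately show "syt n cells (tableau p C)"
    by (simp add: syt_cells_iff)
qed

lemma syt_eq_tableau:
  assumes T: "syt n cells T"
  shows "T = tableau (T dot) (T ` col_cells)"
proof
  fix c
  have col: "T (col_cell t) = tableau (T dot) (T ` col_cells) (col_cell t)" if "t < b" for t
  proof -
    have "T ` col_cells = (\<lambda>t. T (col_cell t)) ` {..<b}"
      by (simp add: col_cells_def image_image)
    then show ?thesis
      using sorted_list_of_set_image_nth[of b "\<lambda>t. T (col_cell t)", OF syt_col_less[OF T]] that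
      by (simp add: tableau_col_cell)
  qed
  have row: "T (row_cell t) = tableau (T dot) (T ` col_cells) (row_cell t)" if "t < r" for t
  proof -
    have "{1..n} - insert (T dot) (T ` col_cells) = (\<lambda>t. T (row_cell t)) ` {..<r}"
      using syt_image_row_cells[OF T] by (simp add: row_cells_def image_image)
    then show ?thesis
      using sorted_list_of_set_image_nth[of r "\<lambda>t. T (row_cell t)", OF syt_row_less[OF T]] that
      by (simp add: tableau_row_cell)
  qed
  show "T c = tableau (T dot) (T ` col_cells) c"
  proof (cases "c \<in> cells")
    case True
    then show ?thesis
      unfolding mem_cells_iff using col row by auto
  next
    case False
    then have "T c = 0"
      using T unfolding syt_def by blast
    moreover have "tableau (T dot) (T ` col_cells) c = 0"
      using False by (simp add: tableau_def cells_def)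
    ultimately show ?thesis
      by simp
  qed
qed

lemma syt_eqI:
  assumes "syt n cells T1" and "syt n cells T2"
    and "T1 dot = T2 dot" and "T1 ` col_cells = T2 ` col_cells"
  shows "T1 = T2"
  using syt_eq_tableau[OF assms(1)] syt_eq_tableau[OF assms(2)] assms(3,4) by simp

definition cdes :: "(nat \<times> nat \<Rightarrow> nat) \<Rightarrow> nat set" where
  "cdes T = insert (T dot) (T ` col_cells) - {cyc_pred n (T dot)}"

definition rotate :: "(nat \<times> nat \<Rightarrow> nat) \<Rightarrow> nat \<times> nat \<Rightarrow> nat" where
  "rotate T = tableau (cyc_succ n (T dot)) (cyc_succ n ` T ` col_cells)"

lemma cdes_subset: "syt n cells T \<Longrightarrow> cdes T \<subseteq> {1..n}"
  using syt_entries[of T] by (auto simp: cdes_def)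

lemma syt_lower_row_iff:
  assumes T: "syt n cells T" and c: "c \<in> cells" and c': "c' \<in> cells" and succ: "T c' = Suc (T c)"
  shows "fst c < fst c' \<longleftrightarrow> (c = dot \<or> c \<in> col_cells) \<and> c' \<noteq> dot"
proof -
  have fst_cells: "fst dot = 0" "fst (col_cell t) = Suc t" "fst (row_cell t) = Suc b" for t
    by (simp_all add: dot_def col_cell_def row_cell_def)
  have "fst c' \<le> Suc b"
    using c' unfolding mem_cells_iff by (auto simp: fst_cells)
  from c consider "c = dot" | t where "t < b" "c = col_cell t" | t where "t < r" "c = row_cell t"
    unfolding mem_cells_iff by blast
  then show ?thesis
  proof cases
    case 1
    then have "c' \<noteq> dot"
      using succ by auto
    then have "fst c' \<noteq> 0"
      using c' unfolding mem_cells_iff by (auto simp: fst_cells)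
    then show ?thesis
      using 1 \<open>c' \<noteq> dot\<close> fst_cells by simp
  next
    case (2 t)
    then have "c \<in> col_cells"
      by (simp add: col_cells_def)
    from c' consider "c' = dot" | t' where "t' < b" "c' = col_cell t'" | t' where "t' < r" "c' = row_cell t'"
      unfolding mem_cells_iff by blast
    then show ?thesis
    proof cases
      case (2 t')
      have "t < t'"
      proof (rule ccontr)
        assume "\<not> t < t'"
        then have "T (col_cell t') \<le> T (col_cell t)"
          using syt_col_less[OF T, of t' t] \<open>t < b\<close> by (cases "t = t'") auto
        then show False
          using succ \<open>c = col_cell t\<close> \<open>c' = col_cell t'\<close> by simp
      qed
      then show ?thesis
        using \<open>c = col_cell t\<close> \<open>c' = col_cell t'\<close> \<open>c \<in> col_cells\<close> fst_cells
        by (simp add: dot_def col_cell_def)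
    qed (use \<open>c = col_cell t\<close> \<open>c \<in> col_cells\<close> \<open>t < b\<close> fst_cells in \<open>auto simp: dot_def row_cell_def\<close>)
  next
    case (3 t)
    then have "c \<in> row_cells"
      by (simp add: row_cells_def)
    then have "c \<noteq> dot" "c \<notin> col_cells"
      using dot_notin(2) col_cells_Int_row_cells by auto
    then show ?thesis
      using \<open>fst c' \<le> Suc b\<close> 3 fst_cells by simp
  qed
qed

lemma cdes_iff:
  assumes T: "syt n cells T" and c: "c \<in> cells" "T c = i" and i: "i \<in> {1..<n}"
    and c': "c' \<in> cells" "T c' = Suc i"
  shows "i \<in> cdes T \<longleftrightarrow> (c = dot \<or> c \<in> col_cells) \<and> c' \<noteq> dot"
proof -
  have inj: "inj_on T cells"
    using syt_bij_betw[OF T] by (rule bij_betw_imp_inj_on)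
  have "i = T dot \<longleftrightarrow> c = dot"
    using inj_on_eq_iff[OF inj c(1) dot_in_cells] c(2) by auto
  moreover have "i \<in> T ` col_cells \<longleftrightarrow> c \<in> col_cells"
    using inj_on_image_mem_iff[OF inj c(1) col_cells_subset] c(2) by auto
  moreover have "i = cyc_pred n (T dot) \<longleftrightarrow> c' = dot"
    using cyc_pred_eq_iff[OF syt_entries(1)[OF T] i] inj_on_eq_iff[OF inj c'(1) dot_in_cells] c'(2)
    by auto
  ultimately show ?thesis
    by (auto simp: cdes_def)
qed

lemma cdes_Int_eq_Des:
  assumes T: "syt n cells T"
  shows "cdes T \<inter> {1..n - 1} = Des_syt n cells T"
proof (rule set_eqI)
  fix i
  show "i \<in> cdes T \<inter> {1..n - 1} \<longleftrightarrow> i \<in> Des_syt n cells T"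
  proof (cases "i \<in> {1..<n}")
    case False
    then show ?thesis
      by (auto simp: Des_syt_def)
  next
    case True
    have bij: "bij_betw T cells {1..n}"
      using T by (rule syt_bij_betw)
    define c where "c = inv_into cells T i"
    define c' where "c' = inv_into cells T (Suc i)"
    have "i \<in> T ` cells" "Suc i \<in> T ` cells"
      using bij_betw_imp_surj_on[OF bij] True by auto
    then have c: "c \<in> cells" "T c = i" and c': "c' \<in> cells" "T c' = Suc i"
      by (auto simp: c_def c'_def inv_into_into f_inv_into_f)
    have "i \<in> Des_syt n cells T \<longleftrightarrow> fst c < fst c'"
      using True by (auto simp: Des_syt_def c_def c'_def)
    also have "\<dots> \<longleftrightarrow> i \<in> cdes T"
      using syt_lower_row_iff[OF T c(1) c'(1)] cdes_iff[OF T c True c'] c(2) c'(2) by simp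
    finally show ?thesis
      using True by auto
  qed
qed

lemma cyc_succ_image_subset: "cyc_succ n ` {1..n} \<subseteq> {1..n}"
  using cyc_succ_in by blast

lemma cyc_pred_image_subset: "cyc_pred n ` {1..n} \<subseteq> {1..n}"
  using cyc_pred_in by blast

lemma
  assumes T: "syt n cells T"
  shows syt_rotate: "syt n cells (rotate T)"
    and rotate_dot: "rotate T dot = cyc_succ n (T dot)"
    and rotate_image_col_cells: "rotate T ` col_cells = cyc_succ n ` T ` col_cells"
proof -
  note entries = inj_on_image_entries[OF inj_on_cyc_succ cyc_succ_image_subset syt_entries(1,2)[OF T]]
  have card: "card (cyc_succ n ` T ` col_cells) = b"
    using entries(3) syt_entries(3)[OF T] by simp
  show "syt n cells (rotate T)"
    unfolding rotate_def by (rule syt_tableau[OF entries(1,2) card])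
  show "rotate T dot = cyc_succ n (T dot)"
    by (simp add: rotate_def)
  show "rotate T ` col_cells = cyc_succ n ` T ` col_cells"
    unfolding rotate_def by (rule tableau_image_col_cells[OF entries(1,2) card])
qed

lemma rotate_eq_iff:
  assumes T1: "syt n cells T1" and T2: "syt n cells T2"
  shows "rotate T1 = rotate T2 \<longleftrightarrow> T1 = T2"
proof
  assume eq: "rotate T1 = rotate T2"
  have "cyc_succ n (T1 dot) = cyc_succ n (T2 dot)"
    using rotate_dot[OF T1] rotate_dot[OF T2] eq by metis
  then have dot: "T1 dot = T2 dot"
    using inj_onD[OF inj_on_cyc_succ _ syt_entries(1)[OF T1] syt_entries(1)[OF T2]] by simp
  have "cyc_succ n ` T1 ` col_cells = cyc_succ n ` T2 ` col_cells"
    using rotate_image_col_cells[OF T1] rotate_image_col_cells[OF T2] eq by metis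
  moreover have "T1 ` col_cells \<subseteq> {1..n}" "T2 ` col_cells \<subseteq> {1..n}"
    using syt_entries(2)[OF T1] syt_entries(2)[OF T2] by auto
  ultimately have "T1 ` col_cells = T2 ` col_cells"
    using inj_on_image_eq_iff[OF inj_on_cyc_succ] by simp
  with dot show "T1 = T2"
    by (rule syt_eqI[OF T1 T2])
qed simp

lemma rotate_surj:
  assumes T': "syt n cells T'"
  shows "\<exists>T. syt n cells T \<and> rotate T = T'"
proof -
  note entries = inj_on_image_entries[OF inj_on_cyc_pred cyc_pred_image_subset syt_entries(1,2)[OF T']]
  define T where "T = tableau (cyc_pred n (T' dot)) (cyc_pred n ` T' ` col_cells)"
  have card: "card (cyc_pred n ` T' ` col_cells) = b"
    using entries(3) syt_entries(3)[OF T'] by simp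
  have T: "syt n cells T"
    unfolding T_def by (rule syt_tableau[OF entries(1,2) card])
  have "rotate T dot = T' dot"
    using rotate_dot[OF T] cyc_succ_cyc_pred[OF syt_entries(1)[OF T']] by (simp add: T_def)
  moreover have "rotate T ` col_cells = T' ` col_cells"
  proof -
    have "rotate T ` col_cells = cyc_succ n ` cyc_pred n ` T' ` col_cells"
      using rotate_image_col_cells[OF T] tableau_image_col_cells[OF entries(1,2) card] by (simp add: T_def)
    also have "\<dots> = T' ` col_cells"
    proof -
      have "cyc_succ n (cyc_pred n y) = y" if "y \<in> T' ` col_cells" for y
        by (rule cyc_succ_cyc_pred) (use that syt_entries(2)[OF T'] in auto)
      then show ?thesis
        unfolding image_image by simp
    qed
    finally show ?thesis .
  qed
  ultimately have "rotate T = T'"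
    by (rule syt_eqI[OF syt_rotate[OF T] T'])
  then show ?thesis
    using T by blast
qed

lemma bij_betw_rotate: "bij_betw rotate {T. syt n cells T} {T. syt n cells T}"
proof (rule bij_betwI')
  show "rotate T1 = rotate T2 \<longleftrightarrow> T1 = T2" if "T1 \<in> {T. syt n cells T}" "T2 \<in> {T. syt n cells T}" for T1 T2
    using rotate_eq_iff that by simp
  show "rotate T \<in> {T. syt n cells T}" if "T \<in> {T. syt n cells T}" for T
    using syt_rotate that by simp
  show "\<exists>T\<in>{T. syt n cells T}. T' = rotate T" if "T' \<in> {T. syt n cells T}" for T'
    using rotate_surj that by fastforce
qed

lemma cdes_rotate:
  assumes T: "syt n cells T"
  shows "cdes (rotate T) = cyc_shift n (cdes T)"
proof -
  define p where "p = T dot"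
  define C where "C = T ` col_cells"
  have p: "p \<in> {1..n}" and C: "C \<subseteq> {1..n}"
    using syt_entries[OF T] by (auto simp: p_def C_def)
  have "cdes (rotate T) = insert (cyc_succ n p) (cyc_succ n ` C) - {cyc_pred n (cyc_succ n p)}"
    using rotate_dot[OF T] rotate_image_col_cells[OF T] by (simp add: cdes_def p_def C_def)
  also have "\<dots> = cyc_succ n ` insert p C - cyc_succ n ` {cyc_pred n p}"
    using cyc_pred_cyc_succ[OF p] cyc_succ_cyc_pred[OF p] by simp
  also have "\<dots> = cyc_succ n ` (insert p C - {cyc_pred n p})"
  proof -
    have "insert p C - {cyc_pred n p} \<subseteq> {1..n}" "{cyc_pred n p} \<subseteq> {1..n}"
      using p C cyc_pred_in[OF p] by auto
    then show ?thesis
      by (rule inj_on_image_set_diff[OF inj_on_cyc_succ, symmetric])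
  qed
  finally show ?thesis
    by (simp add: cyc_shift_eq_image cdes_def p_def C_def)
qed

lemma cyc_desc_ext_cdes_rotate: "cyc_desc_ext n cells cdes rotate"
  unfolding cyc_desc_ext_def
proof (intro conjI allI impI bij_betw_rotate)
  fix T assume T: "syt n cells T"
  have p: "T dot \<in> {1..n}"
    using syt_entries(1)[OF T] .
  show "cdes T \<subseteq> {1..n}"
    using cdes_subset[OF T] .
  show "cdes T \<inter> {1..n - 1} = Des_syt n cells T"
    using cdes_Int_eq_Des[OF T] .
  show "cdes (rotate T) = cyc_shift n (cdes T)"
    using cdes_rotate[OF T] .
  show "cdes T \<noteq> {}"
    using cyc_pred_neq[OF n_ge_2 p] by (auto simp: cdes_def)
  show "cdes T \<noteq> {1..n}"
    using cyc_pred_in[OF p] by (auto simp: cdes_def)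
qed

lemma card_cdes:
  assumes T: "syt n cells T" and "even b"
  shows "2 * (card (cdes T) div 2) = b"
proof -
  define p where "p = T dot"
  define C where "C = T ` col_cells"
  have sub: "C \<subseteq> {1..n} - {p}" and card_C: "card C = b"
    using syt_entries[OF T] by (simp_all add: p_def C_def)
  have "finite C"
    by (rule finite_subset[OF sub]) simp
  moreover have "p \<notin> C"
    using sub by blast
  ultimately have card_insert: "card (insert p C) = Suc b"
    using card_C by simp
  have cdes_eq: "cdes T = insert p C - {cyc_pred n p}"
    by (simp add: cdes_def p_def C_def)
  show ?thesis
  proof (cases "cyc_pred n p \<in> insert p C")
    case True
    then have "card (cdes T) = b"
      using card_insert \<open>finite C\<close> by (simp add: cdes_eq card_Diff_singleton)
    then show ?thesis
      using \<open>even b\<close> by simp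
  next
    case False
    then have "card (cdes T) = Suc b"
      using card_insert by (simp add: cdes_eq)
    then show ?thesis
      using \<open>even b\<close> by simp
  qed
qed

lemma syt_eqI_cdes:
  assumes T1: "syt n cells T1" and T2: "syt n cells T2"
    and dot: "T1 dot = T2 dot" and cdes: "cdes T1 = cdes T2"
  shows "T1 = T2"
proof -
  define p where "p = T1 dot"
  define q where "q = cyc_pred n p"
  define C1 where "C1 = T1 ` col_cells"
  define C2 where "C2 = T2 ` col_cells"
  have sub: "C1 \<subseteq> {1..n} - {p}" "C2 \<subseteq> {1..n} - {p}" and card: "card C1 = b" "card C2 = b"
    using syt_entries[OF T1] syt_entries[OF T2] dot by (simp_all add: p_def C1_def C2_def)
  have "C1 - {q} = cdes T1 - {p}" "C2 - {q} = cdes T2 - {p}"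
    using sub dot by (auto simp: cdes_def p_def q_def C1_def C2_def)
  then have same_rest: "C1 - {q} = C2 - {q}"
    using cdes by simp
  have "finite C1" "finite C2"
    using sub by (auto intro: finite_subset)
  have smaller: "card (C - {q}) < b" if "finite C" "q \<in> C" "card C = b" for C
    using card_Diff1_less[OF that(1,2)] that(3) by simp
  have "q \<in> C1 \<longleftrightarrow> q \<in> C2"
  proof
    assume "q \<in> C1"
    show "q \<in> C2"
    proof (rule ccontr)
      assume "q \<notin> C2"
      then show False
        using smaller[OF \<open>finite C1\<close> \<open>q \<in> C1\<close> card(1)] same_rest card(2) by simp
    qed
  next
    assume "q \<in> C2"
    show "q \<in> C1"
    proof (rule ccontr)
      assume "q \<notin> C1"
      then show False
        using smaller[OF \<open>finite C2\<close> \<open>q \<in> C2\<close> card(2)] same_rest card(1) by simp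
    qed
  qed
  then have "C1 = C2"
    using same_rest by blast
  then show ?thesis
    using syt_eqI[OF T1 T2 dot] by (simp add: C1_def C2_def)
qed

lemma syt_exists_cdes:
  assumes J: "J \<subseteq> {1..n}" and b: "b = 2 * (card J div 2)" and p: "p \<in> run_starts n J"
  shows "\<exists>T. syt n cells T \<and> T dot = p \<and> cdes T = J"
proof -
  have pn: "p \<in> {1..n}" and "p \<in> J" and "cyc_pred n p \<notin> J"
    using p by (auto simp: run_starts_def)
  define q where "q = cyc_pred n p"
  have q: "q \<in> {1..n}" "q \<noteq> p" "q \<notin> J"
    using cyc_pred_in[OF pn] cyc_pred_neq[OF n_ge_2 pn] \<open>cyc_pred n p \<notin> J\<close> by (simp_all add: q_def)
  define C where "C = (if even (card J) then insert q (J - {p}) else J - {p})"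
  have sub: "C \<subseteq> {1..n} - {p}"
    using J q by (auto simp: C_def)
  have "finite J"
    using J by (rule finite_subset) simp
  then have "card (J - {p}) = card J - 1" "card J \<ge> 1"
    using \<open>p \<in> J\<close> by (auto simp: Suc_le_eq card_gt_0_iff)
  moreover have "card (insert q (J - {p})) = Suc (card (J - {p}))"
    using \<open>finite J\<close> q(3) by simp
  ultimately have card: "card C = b"
    unfolding C_def b by (auto elim: oddE)
  have "cdes (tableau p C) = insert p C - {q}"
    using tableau_image_col_cells[OF pn sub card] by (simp add: cdes_def q_def)
  also have "\<dots> = J"
    using \<open>p \<in> J\<close> q by (auto simp: C_def)
  finally show ?thesis
    using syt_tableau[OF pn sub card] by auto
qed

lemma card_syt_cdes:
  assumes "even b" and J: "J \<subseteq> {1..n}"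
  shows "card {T. syt n cells T \<and> cdes T = J} = (if b = 2 * (card J div 2) then card (run_starts n J) else 0)"
proof (cases "b = 2 * (card J div 2)")
  case False
  then have empty: "{T. syt n cells T \<and> cdes T = J} = {}"
    using card_cdes \<open>even b\<close> by auto
  show ?thesis
    using False by (simp add: empty)
next
  case True
  have "bij_betw (\<lambda>T. T dot) {T. syt n cells T \<and> cdes T = J} (run_starts n J)"
  proof (rule bij_betwI')
    fix T assume "T \<in> {T. syt n cells T \<and> cdes T = J}"
    then have T: "syt n cells T" and "cdes T = J"
      by auto
    moreover have "T dot \<in> cdes T" "cyc_pred n (T dot) \<notin> cdes T"
      using cyc_pred_neq[OF n_ge_2 syt_entries(1)[OF T]] by (auto simp: cdes_def)
    ultimately show "T dot \<in> run_starts n J"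
      using syt_entries(1)[OF T] by (simp add: run_starts_def)
  next
    fix T1 T2 assume "T1 \<in> {T. syt n cells T \<and> cdes T = J}" "T2 \<in> {T. syt n cells T \<and> cdes T = J}"
    then show "T1 dot = T2 dot \<longleftrightarrow> T1 = T2"
      using syt_eqI_cdes by auto
  next
    fix p assume "p \<in> run_starts n J"
    then show "\<exists>T\<in>{T. syt n cells T \<and> cdes T = J}. p = T dot"
      using syt_exists_cdes[OF J True] by fastforce
  qed
  then show ?thesis
    using True by (simp add: bij_betw_same_card)
qed

lemma admissible_shape:
  "skew_shape outer inner \<and> card (outer - inner) = n \<and> \<not> connected_ribbon (outer - inner)
    \<and> (\<exists>\<psi>. cyc_desc_ext n (outer - inner) cdes \<psi>)"
  using skew_shape_outer_inner card_cells not_connected_ribbon_cells cyc_desc_ext_cdes_rotate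
  by (auto simp: outer_diff_inner)

end

lemma dot_col_row_even: "n \<ge> 2 \<Longrightarrow> k < (n + 1) div 2 \<Longrightarrow> dot_col_row n (2 * k)"
  by unfold_locales presburger+

lemma sum_card_syt_cdes:
  assumes "n \<ge> 2" and J: "J \<subseteq> {1..n}"
  shows "(\<Sum>k<(n + 1) div 2. card {T. syt n (dot_col_row.cells n (2 * k)) T \<and> dot_col_row.cdes n (2 * k) T = J})
    = card (run_starts n J)"
proof -
  have summand: "card {T. syt n (dot_col_row.cells n (2 * k)) T \<and> dot_col_row.cdes n (2 * k) T = J}
      = (if k = card J div 2 then card (run_starts n J) else 0)" if "k \<in> {..<(n + 1) div 2}" for k
  proof -
    interpret dot_col_row n "2 * k"
      using dot_col_row_even assms(1) that by simp
    show ?thesis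
      using card_syt_cdes[OF _ J] by simp
  qed
  have bound: "card J div 2 < (n + 1) div 2" if nonempty: "run_starts n J \<noteq> {}"
  proof -
    obtain p where "p \<in> run_starts n J"
      using nonempty by blast
    then have "cyc_pred n p \<in> {1..n} - J"
      using cyc_pred_in by (auto simp: run_starts_def)
    then have "J \<subset> {1..n}"
      using J by blast
    then have "card J < n"
      using psubset_card_mono[of "{1..n}" J] by simp
    then show ?thesis
      by presburger
  qed
  have "(\<Sum>k<(n + 1) div 2. card {T. syt n (dot_col_row.cells n (2 * k)) T \<and> dot_col_row.cdes n (2 * k) T = J})
    = (\<Sum>k<(n + 1) div 2. if k = card J div 2 then card (run_starts n J) else 0)"
    by (rule sum.cong[OF refl summand])
  also have "\<dots> = card (run_starts n J)"
    using bound by (cases "run_starts n J = {}") auto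
  finally show ?thesis .
qed

lemma card_arc_perms_cDes_eq_sum:
  assumes "n \<ge> 2"
  shows "card {\<pi> \<in> arc_perms n. cDes_perm n \<pi> = J}
    = (\<Sum>k<(n + 1) div 2. card {T. syt n (dot_col_row.cells n (2 * k)) T \<and> dot_col_row.cdes n (2 * k) T = J})"
proof (cases "J \<subseteq> {1..n}")
  case True
  then show ?thesis
    using card_arc_perms_cDes[OF assms True] sum_card_syt_cdes[OF assms True] by simp
next
  case False
  have no_perms: "{\<pi> \<in> arc_perms n. cDes_perm n \<pi> = J} = {}"
    using False cDes_perm_subset by blast
  have no_tableaux: "{T. syt n (dot_col_row.cells n (2 * k)) T \<and> dot_col_row.cdes n (2 * k) T = J} = {}"
    if "k \<in> {..<(n + 1) div 2}" for k
  proof -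
    interpret dot_col_row n "2 * k"
      using dot_col_row_even assms that by simp
    show ?thesis
      using False cdes_subset by blast
  qed
  show ?thesis
    by (simp add: no_perms no_tableaux)
qed

theorem corollary6p3:
  fixes n :: nat
  assumes "n \<ge> 2"
  shows "cyclic_schur_positive n (arc_perms n)"
proof -
  define shapes where
    "shapes = map (\<lambda>k. (dot_col_row.outer n (2 * k), dot_col_row.inner n (2 * k))) [0..<(n + 1) div 2]"
  define cds where "cds = (\<lambda>k. dot_col_row.cdes n (2 * k))"
  have length: "length shapes = (n + 1) div 2"
    by (simp add: shapes_def)
  have shape: "dot_col_row n (2 * k)"
    "shapes ! k = (dot_col_row.outer n (2 * k), dot_col_row.inner n (2 * k))" if "k < length shapes" for k
    using that dot_col_row_even[OF assms] by (simp_all add: shapes_def)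
  have "skew_shape (fst (shapes ! k)) (snd (shapes ! k)) \<and> card (fst (shapes ! k) - snd (shapes ! k)) = n
      \<and> \<not> connected_ribbon (fst (shapes ! k) - snd (shapes ! k))
      \<and> (\<exists>\<psi>. cyc_desc_ext n (fst (shapes ! k) - snd (shapes ! k)) (cds k) \<psi>)" if "k < length shapes" for k
    using dot_col_row.admissible_shape[OF shape(1)[OF that]] shape(2)[OF that] by (simp add: cds_def)
  moreover have "card {\<pi> \<in> arc_perms n. cDes_perm n \<pi> = J}
      = (\<Sum>k<length shapes. card {T. syt n (fst (shapes ! k) - snd (shapes ! k)) T \<and> cds k T = J})" for J
    unfolding card_arc_perms_cDes_eq_sum[OF assms] length
    by (rule sum.cong[OF refl]) (simp add: shape length cds_def dot_col_row.outer_diff_inner)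
  ultimately show ?thesis
    unfolding cyclic_schur_positive_def by blast
qed

end
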